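(* Let $Q$ be a finite-dimensional real affine space modelled on $V$, let $n_1,n_2\ge0$ be integers and let $f\in A(Q)$ be such that for every $k\le n_1+n_2$ the multidirectional derivative $\mathrm d^kf$ exists on all of $Q\times V^k$ and is continuous, and such that $\mathrm d^{n_1}(\mathrm d^{n_2}f)$ exists. Then $\mathrm d^{n_1}\mathrm d^{n_2}f=\mathrm d^{n_1+n_2}f$, i.e. for all $q\in Q$, $v_1,\dots,v_{n_1+n_2}\in V$, $$\mathrm d^{n_1}\mathrm d^{n_2}f(q;v_1,\dots,v_{n_1},v_{n_1+1},\dots,v_{n_1+n_2})=\mathrm d^{n_1+n_2}f(q;v_1,\dots,v_{n_1+n_2}).$$
   Context: For $F:Q\times V^m\to\mathbb R$ (with $m\ge0$; $m=0$ means a function on $Q$) and $n\ge1$, the polarization is $\delta^nF(q;v_1,\dots,v_n,w_1,\dots,w_m)=(-1)^n\sum_{I\subset\{1,\dots,n\}}(-1)^{|I|}F(q+\sum_{i\in I}v_i;w_1,\dots,w_m)$ (the $I=\emptyset$ term is $F(q;w)$), $\delta^0F=F$, and the multidirectional derivative is $\mathrm d^nF(q;v_1,\dots,v_n,w_1,\dots,w_m)=\lim_{s\to0}s^{-n}\delta^nF(q;sv_1,\dots,sv_n,w_1,\dots,w_m)$ when the limit exists. Thus $\mathrm d^{n_1}(\mathrm d^{n_2}f)$ differentiates the function $\mathrm d^{n_2}f$ in the point variable, placing the $n_1$ new vector arguments first. *)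

theory Defs
  imports "HOL-Analysis.Analysis"
begin

text \<open>Q is a finite-dimensional real affine space modelled on V; after choosing an origin
we identify Q with V, a type of class euclidean_space. A function F : Q x V^m -> R is
represented as F :: 'a => 'a list => real, the list holding the m vector arguments.\<close>

definition polar :: "nat \<Rightarrow> ('a::real_vector \<Rightarrow> 'a list \<Rightarrow> real) \<Rightarrow> 'a \<Rightarrow> 'a list \<Rightarrow> real" where
  "polar n F q us = (-1::real) ^ n *
     (\<Sum>I\<in>Pow {0..<n}. (-1::real) ^ card I * F (q + (\<Sum>i\<in>I. us ! i)) (drop n us))"

definition md_quot :: "nat \<Rightarrow> ('a::real_vector \<Rightarrow> 'a list \<Rightarrow> real) \<Rightarrow> 'a \<Rightarrow> 'a list \<Rightarrow> real \<Rightarrow> real" where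
  "md_quot n F q us s = inverse (s ^ n) * polar n F q (map (scaleR s) (take n us) @ drop n us)"

definition has_md :: "nat \<Rightarrow> ('a::real_vector \<Rightarrow> 'a list \<Rightarrow> real) \<Rightarrow> 'a \<Rightarrow> 'a list \<Rightarrow> real \<Rightarrow> bool" where
  "has_md n F q us L \<longleftrightarrow> (md_quot n F q us \<longlongrightarrow> L) (at 0)"

definition md :: "nat \<Rightarrow> ('a::real_normed_vector \<Rightarrow> 'a list \<Rightarrow> real) \<Rightarrow> 'a \<Rightarrow> 'a list \<Rightarrow> real" where
  "md n F q us = Lim (at 0) (md_quot n F q us)"

definition md_exists :: "nat \<Rightarrow> nat \<Rightarrow> ('a::real_vector \<Rightarrow> 'a list \<Rightarrow> real) \<Rightarrow> bool" where
  "md_exists n m F \<longleftrightarrow> (\<forall>q us. length us = n + m \<longrightarrow> (\<exists>L. has_md n F q us L))"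

definition cont_on_prod :: "nat \<Rightarrow> ('a::metric_space \<Rightarrow> 'a list \<Rightarrow> real) \<Rightarrow> bool" where
  "cont_on_prod k G \<longleftrightarrow> (\<forall>q us. length us = k \<longrightarrow> (\<forall>e>0. \<exists>d>0. \<forall>q' us'.
      length us' = k \<and> dist q' q < d \<and> (\<forall>i<k. dist (us' ! i) (us ! i) < d)
      \<longrightarrow> \<bar>G q' us' - G q us\<bar> < e))"

end

(* Restricted to a line p + t z, the hypotheses say that every multidirectional difference
   quotient of t |-> f (p + t z) of order at most N converges to a continuous limit. Comparing
   suitable difference stencils at the steps s and 2 s turns such limits into a second-order
   condition on a derivative, and a maximum principle then shows that t |-> f (p + t z) is C^N
   with j-th derivative d^j f(p + t z; z, ..., z).
   Taylor expansion along the finitely many directions that are sums of some of the v_i, where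
   the N-th difference kills all terms of lower order, shows that delta^N f(q'; r v) / r^N tends
   to d^N f(q; v) uniformly for q' near q. Finally, splitting each of the first n1 steps s v_i
   into m steps (s / m) v_i, and taking s / m also as the step of the inner n2-fold difference,
   writes the quotient defining d^n1 (d^n2 f) at scale s as an average of such quotients based
   near q; letting m -> oo gives the claim. *)

theory Submission
  imports Defs
begin

section \<open>Iterated differences\<close>

text \<open>\<open>fdiff n us g q\<close> is the iterated difference \<open>\<delta>\<^sup>n g(q; us!0, \<dots>, us!(n-1))\<close>; entries of
\<open>us\<close> beyond position \<open>n\<close> are ignored.\<close>

primrec fdiff :: "nat \<Rightarrow> 'a::real_vector list \<Rightarrow> ('a \<Rightarrow> real) \<Rightarrow> 'a \<Rightarrow> real" where
  fdiff_0: "fdiff 0 us g q = g q"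
| fdiff_Suc: "fdiff (Suc n) us g q = fdiff n us g (q + us ! n) - fdiff n us g q"

declare fdiff_Suc [simp del]

lemma fdiff_eq_alternating_sum:
  "fdiff n us g q = (-1) ^ n * (\<Sum>I\<in>Pow {0..<n}. (-1) ^ card I * g (q + (\<Sum>i\<in>I. us ! i)))"
proof (induction n arbitrary: q)
  case 0
  show ?case by simp
next
  case (Suc n)
  let ?h = "\<lambda>q I. (-1::real) ^ card I * g (q + (\<Sum>i\<in>I. us ! i))"
  have inj: "inj_on (insert n) (Pow {0..<n})"
    by (rule inj_onI) (metis PowD atLeastLessThan_iff insert_ident order_less_irrefl subsetD)
  have shift: "?h q (insert n I) = - ?h (q + us ! n) I" if "I \<in> Pow {0..<n}" for I
  proof -
    have "finite I" "n \<notin> I" using that by (auto dest: finite_subset)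
    then show ?thesis by (simp add: add_ac)
  qed
  have "(\<Sum>I\<in>Pow {0..<Suc n}. ?h q I) = (\<Sum>I\<in>Pow {0..<n}. ?h q I) + (\<Sum>I\<in>insert n ` Pow {0..<n}. ?h q I)"
    by (subst atLeast0_lessThan_Suc, subst Pow_insert, rule sum.union_disjoint) auto
  also have "(\<Sum>I\<in>insert n ` Pow {0..<n}. ?h q I) = - (\<Sum>I\<in>Pow {0..<n}. ?h (q + us ! n) I)"
    by (simp add: sum.reindex[OF inj] shift sum_negf)
  finally have S: "(\<Sum>I\<in>Pow {0..<Suc n}. ?h q I) = (\<Sum>I\<in>Pow {0..<n}. ?h q I) - (\<Sum>I\<in>Pow {0..<n}. ?h (q + us ! n) I)"
    by simp
  show ?case
    by (simp only: S) (simp add: fdiff_Suc Suc.IH algebra_simps)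
qed

lemma polar_eq_fdiff: "polar n F q us = fdiff n us (\<lambda>p. F p (drop n us)) q"
  by (simp add: polar_def fdiff_eq_alternating_sum)

lemma fdiff_cong: "(\<And>i. i < n \<Longrightarrow> us ! i = vs ! i) \<Longrightarrow> fdiff n us g q = fdiff n vs g q"
  by (induction n arbitrary: q) (auto simp: fdiff_Suc)

lemma fdiff_append_right: "n \<le> length us \<Longrightarrow> fdiff n (us @ vs) g q = fdiff n us g q"
  by (rule fdiff_cong) (simp add: nth_append)

lemma fdiff_replicate_Suc: "fdiff n (replicate (Suc n) c) g q = fdiff n (replicate n c) g q"
  by (rule fdiff_cong) (simp del: replicate_Suc)

lemma fdiff_linear: "fdiff n us (\<lambda>p. a * g p + b * h p) q = a * fdiff n us g q + b * fdiff n us h q"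
  by (induction n arbitrary: q) (simp_all add: fdiff_Suc algebra_simps)

lemma fdiff_diff: "fdiff n us (\<lambda>p. g p - h p) q = fdiff n us g q - fdiff n us h q"
  using fdiff_linear[of n us 1 g "-1" h q] by simp

lemma fdiff_add: "fdiff n us (\<lambda>p. g p + h p) q = fdiff n us g q + fdiff n us h q"
  using fdiff_linear[of n us 1 g 1 h q] by simp

lemma fdiff_cmult: "fdiff n us (\<lambda>p. a * g p) q = a * fdiff n us g q"
  using fdiff_linear[of n us a g 0 g q] by simp

lemma fdiff_zero_fun: "fdiff n us (\<lambda>p. 0) q = 0"
  using fdiff_cmult[of n us 0 "\<lambda>p. 0" q] by simp

lemma fdiff_sum: "fdiff n us (\<lambda>p. \<Sum>i\<in>A. h i p) q = (\<Sum>i\<in>A. fdiff n us (h i) q)"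
  by (induction n arbitrary: q) (simp_all add: fdiff_Suc sum_subtractf)

lemma fdiff_translate: "fdiff n us (\<lambda>p. g (p + c)) q = fdiff n us g (q + c)"
  by (induction n arbitrary: q) (simp_all add: fdiff_Suc algebra_simps)

lemma fdiff_tendsto:
  assumes "\<And>p. ((\<lambda>t. h t p) \<longlongrightarrow> G p) F"
  shows "((\<lambda>t. fdiff n us (h t) q) \<longlongrightarrow> fdiff n us G q) F"
  by (induction n arbitrary: q) (simp_all add: fdiff_Suc tendsto_diff assms)

lemma fdiff_bound:
  assumes "\<And>I. I \<subseteq> {0..<n} \<Longrightarrow> \<bar>h (q + (\<Sum>i\<in>I. us ! i))\<bar> \<le> B"
  shows "\<bar>fdiff n us h q\<bar> \<le> 2 ^ n * B"
proof -
  have "\<bar>fdiff n us h q\<bar> = \<bar>\<Sum>I\<in>Pow {0..<n}. (-1) ^ card I * h (q + (\<Sum>i\<in>I. us ! i))\<bar>"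
    by (simp add: fdiff_eq_alternating_sum abs_mult)
  also have "\<dots> \<le> (\<Sum>I\<in>Pow {0..<n}. \<bar>(-1) ^ card I * h (q + (\<Sum>i\<in>I. us ! i))\<bar>)"
    by (rule sum_abs)
  also have "\<dots> \<le> (\<Sum>I\<in>Pow {0..<n}. B)"
    by (rule sum_mono) (simp add: abs_mult assms)
  also have "\<dots> = 2 ^ n * B"
    by (simp add: card_Pow)
  finally show ?thesis .
qed

lemma fdiff_snoc:
  "length vs = n \<Longrightarrow> fdiff (Suc n) (vs @ [v]) g q = fdiff n vs (\<lambda>x. g (x + v) - g x) q"
  by (simp add: fdiff_Suc nth_append fdiff_append_right fdiff_diff fdiff_translate)

lemma fdiff_append:
  assumes "length us = n"
  shows "fdiff (n + m) (us @ vs) g q = fdiff n us (\<lambda>x. fdiff m vs g x) q"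
proof (induction m arbitrary: q)
  case 0
  show ?case using assms by (simp add: fdiff_append_right)
next
  case (Suc m)
  have "fdiff (n + Suc m) (us @ vs) g q = fdiff (n + m) (us @ vs) g (q + vs ! m) - fdiff (n + m) (us @ vs) g q"
    using assms by (simp add: fdiff_Suc nth_append)
  also have "\<dots> = fdiff n us (\<lambda>x. fdiff m vs g (x + vs ! m) - fdiff m vs g x) q"
    by (simp add: Suc.IH fdiff_translate [of n us "\<lambda>x. fdiff m vs g x", symmetric] fdiff_diff)
  finally show ?case by (simp add: fdiff_Suc)
qed

lemma fdiff_scaleR_eq_fdiff_at_0:
  "n \<le> length us \<Longrightarrow> fdiff n (map (scaleR r) us) g q = fdiff n us (\<lambda>w. g (q + r *\<^sub>R w)) 0"
proof (induction n arbitrary: q)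
  case (Suc n)
  have "fdiff n us (\<lambda>w. g (q + r *\<^sub>R w)) (us ! n) = fdiff n us (\<lambda>w. g (q + r *\<^sub>R us ! n + r *\<^sub>R w)) 0"
    using fdiff_translate[of n us "\<lambda>w. g (q + r *\<^sub>R w)" "us ! n" 0] by (simp add: algebra_simps)
  then show ?case
    using Suc by (simp add: fdiff_Suc)
qed simp

lemma fdiff_along_line:
  "n \<le> length cs \<Longrightarrow> fdiff n (map (scaleR s) (map (\<lambda>c. c *\<^sub>R z) cs)) f (p + t *\<^sub>R z)
     = fdiff n (map ((*) s) cs) (\<lambda>t'. f (p + t' *\<^sub>R z)) t"
proof (induction n arbitrary: t)
  case (Suc n)
  have e: "p + t *\<^sub>R z + (s * cs ! n) *\<^sub>R z = p + (t + s * cs ! n) *\<^sub>R z"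
    by (simp add: algebra_simps scaleR_add_left)
  show ?case using Suc by (simp add: fdiff_Suc e)
qed simp

section \<open>Derivatives of functions of one variable\<close>

lemma MVT_shift:
  fixes f f' :: "real \<Rightarrow> real"
  assumes "\<And>x. (f has_real_derivative f' x) (at x)"
  shows "\<exists>e. \<bar>e - t\<bar> \<le> \<bar>c\<bar> \<and> f (t + c) - f t = c * f' e"
proof (cases c "0::real" rule: linorder_cases)
  case less
  obtain z where "t + c < z" "z < t" "f t - f (t + c) = (t - (t + c)) * f' z"
    using MVT2[of "t + c" t f f'] less assms by auto
  then show ?thesis by (intro exI[of _ z]) (auto simp: algebra_simps)
next
  case equal
  then show ?thesis by (intro exI[of _ t]) simp
next
  case greater
  obtain z where "t < z" "z < t + c" "f (t + c) - f t = (t + c - t) * f' z"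
    using MVT2[of t "t + c" f f'] greater assms by auto
  then show ?thesis by (intro exI[of _ z]) (auto simp: algebra_simps)
qed

lemma fdiff_has_real_derivative:
  assumes "\<And>x. (g has_real_derivative g' x) (at x)"
  shows "((\<lambda>x. fdiff n us g x) has_real_derivative fdiff n us g' x) (at x)"
proof (induction n arbitrary: x)
  case (Suc n)
  have "((\<lambda>x. fdiff n us g (x + us ! n)) has_real_derivative fdiff n us g' (x + us ! n)) (at x)"
    by (rule DERIV_shift[THEN iffD1]) (rule Suc.IH)
  then show ?case
    unfolding fdiff_Suc by (intro DERIV_diff Suc.IH)
next
  case 0
  have "fdiff 0 us g = g" by auto
  then show ?case using assms by simp
qed

definition deriv_chain :: "nat \<Rightarrow> (nat \<Rightarrow> real \<Rightarrow> real) \<Rightarrow> bool" where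
  "deriv_chain n D \<longleftrightarrow> (\<forall>j<n. \<forall>x. (D j has_real_derivative D (Suc j) x) (at x))"

lemma deriv_chainD: "deriv_chain n D \<Longrightarrow> j < n \<Longrightarrow> (D j has_real_derivative D (Suc j) x) (at x)"
  by (simp add: deriv_chain_def)

lemma deriv_chain_shift: "deriv_chain (Suc n) D \<Longrightarrow> deriv_chain n (\<lambda>j. D (Suc j))"
  by (simp add: deriv_chain_def)

lemma deriv_chain_mono: "deriv_chain n D \<Longrightarrow> m \<le> n \<Longrightarrow> deriv_chain m D"
  by (simp add: deriv_chain_def)

lemma deriv_chain_linear:
  "deriv_chain n F \<Longrightarrow> deriv_chain n G \<Longrightarrow> deriv_chain n (\<lambda>j x. a * F j x + b * G j x)"
  unfolding deriv_chain_def by (auto intro!: derivative_eq_intros)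

lemma deriv_chain_continuous: "deriv_chain n D \<Longrightarrow> j < n \<Longrightarrow> continuous_on UNIV (D j)"
  by (meson DERIV_continuous continuous_at_imp_continuous_on deriv_chainD)

lemma deriv_chain_snoc:
  assumes "deriv_chain n D" "\<And>x. (D n has_real_derivative h x) (at x)"
  shows "deriv_chain (Suc n) (\<lambda>j. if j \<le> n then D j else h)"
  unfolding deriv_chain_def
proof (intro allI impI)
  fix j x
  assume "j < Suc n"
  then show "((if j \<le> n then D j else h) has_real_derivative (if Suc j \<le> n then D (Suc j) else h) x) (at x)"
    using deriv_chainD[OF assms(1), of j x] assms(2)[of x] by (cases "j = n") auto
qed

lemma fdiff_mean_value:
  assumes "deriv_chain m D" "length cs = m"
  shows "\<exists>e. \<bar>e - t\<bar> \<le> sum_list (map abs cs) \<and> fdiff m cs (D 0) t = prod_list cs * D m e"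
  using assms
proof (induction m arbitrary: cs D t)
  case 0
  then show ?case by (intro exI[of _ t]) simp
next
  case (Suc m)
  obtain cs' c where cs: "cs = cs' @ [c]" and l: "length cs' = m"
    using Suc.prems(2) by (metis length_Suc_conv_rev)
  have "\<And>x. ((\<lambda>x. fdiff m cs' (D 0) x) has_real_derivative fdiff m cs' (D 1) x) (at x)"
    using deriv_chainD[OF Suc.prems(1)] by (intro fdiff_has_real_derivative) simp
  then obtain e where e: "\<bar>e - t\<bar> \<le> \<bar>c\<bar>" "fdiff m cs' (D 0) (t + c) - fdiff m cs' (D 0) t = c * fdiff m cs' (D 1) e"
    using MVT_shift by blast
  obtain e' where e': "\<bar>e' - e\<bar> \<le> sum_list (map abs cs')" "fdiff m cs' (D 1) e = prod_list cs' * D (Suc m) e'"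
    using Suc.IH[OF deriv_chain_shift[OF Suc.prems(1)] l] by auto
  have "fdiff (Suc m) cs (D 0) t = prod_list cs * D (Suc m) e'"
    using e e' l by (simp add: fdiff_Suc cs nth_append fdiff_append_right mult_ac)
  moreover have "\<bar>e' - t\<bar> \<le> sum_list (map abs cs)"
    using e(1) e'(1) by (simp add: cs)
  ultimately show ?case by blast
qed

lemma sum_list_abs_mult: "sum_list (map (\<lambda>c. \<bar>s * c\<bar>) cs) = \<bar>s\<bar> * sum_list (map abs (cs::real list))"
  by (induction cs) (simp_all add: abs_mult algebra_simps)

lemma prod_list_map_mult: "prod_list (map ((*) s) cs) = s ^ length cs * prod_list (cs::real list)"
  by (induction cs) (simp_all add: mult_ac)

lemma tendsto_at_0_of_abs_diff_le:
  fixes \<xi> :: "real \<Rightarrow> real"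
  assumes "\<And>s. \<bar>\<xi> s - t\<bar> \<le> \<bar>s\<bar> * C"
  shows "(\<xi> \<longlongrightarrow> t) (at 0)"
proof -
  have "((\<lambda>s. \<xi> s - t) \<longlongrightarrow> 0) (at 0)"
    by (rule Lim_null_comparison[where g="\<lambda>s. \<bar>s\<bar> * C"]) (use assms in \<open>auto intro!: tendsto_eq_intros\<close>)
  then show ?thesis
    by (simp add: LIM_zero_iff)
qed

lemma fdiff_quotient_tendsto_deriv:
  assumes "deriv_chain m D" "continuous_on UNIV (D m)" "length cs = m"
  shows "((\<lambda>s. fdiff m (map ((*) s) cs) (D 0) t / s ^ m) \<longlongrightarrow> prod_list cs * D m t) (at 0)"
proof -
  have "\<forall>s. \<exists>e. \<bar>e - t\<bar> \<le> \<bar>s\<bar> * sum_list (map abs cs) \<and>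
      fdiff m (map ((*) s) cs) (D 0) t = s ^ m * prod_list cs * D m e"
    using fdiff_mean_value[OF assms(1), of "map ((*) _) cs" t] assms(3)
    by (simp add: o_def sum_list_abs_mult prod_list_map_mult)
  then obtain \<xi> where \<xi>: "\<And>s. \<bar>\<xi> s - t\<bar> \<le> \<bar>s\<bar> * sum_list (map abs cs)"
    "\<And>s. fdiff m (map ((*) s) cs) (D 0) t = s ^ m * prod_list cs * D m (\<xi> s)"
    by metis
  have "(\<xi> \<longlongrightarrow> t) (at 0)"
    using \<xi>(1) by (rule tendsto_at_0_of_abs_diff_le)
  then have "((\<lambda>s. prod_list cs * D m (\<xi> s)) \<longlongrightarrow> prod_list cs * D m t) (at 0)"
    using assms(2) by (intro tendsto_mult_left isCont_tendsto_compose[of _ "D m"])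
      (simp_all add: continuous_on_eq_continuous_at)
  moreover have "\<forall>\<^sub>F s in at 0. prod_list cs * D m (\<xi> s) = fdiff m (map ((*) s) cs) (D 0) t / s ^ m"
    by (auto simp: eventually_at_filter \<xi>(2))
  ultimately show ?thesis
    by (rule Lim_transform_eventually)
qed

lemma exists_antiderivative:
  assumes "continuous_on UNIV h"
  shows "\<exists>F. \<forall>x. (F has_real_derivative h x) (at x)"
proof -
  have "\<exists>F. \<forall>x :: real. (-\<infinity>::ereal) < x \<longrightarrow> x < \<infinity> \<longrightarrow> (F has_vector_derivative h x) (at x)"
    by (rule einterval_antiderivative) (use assms in \<open>auto simp: continuous_on_eq_continuous_at\<close>)
  then show ?thesis
    by (auto simp: has_real_derivative_iff_has_vector_derivative)
qed

lemma exists_deriv_chain_extending: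
  assumes "deriv_chain k H" "continuous_on UNIV (H k)"
  shows "\<exists>F. deriv_chain (n + k) F \<and> continuous_on UNIV (F (n + k)) \<and> (\<forall>j\<le>k. F (n + j) = H j)"
proof (induction n)
  case 0
  show ?case using assms by auto
next
  case (Suc n)
  then obtain F where F: "deriv_chain (n + k) F" "continuous_on UNIV (F (n + k))" "\<forall>j\<le>k. F (n + j) = H j"
    by blast
  have "continuous_on UNIV (F 0)"
    using F(1,2) deriv_chain_continuous[OF F(1), of 0] by (cases "n + k") auto
  then obtain G where G: "\<And>x. (G has_real_derivative F 0 x) (at x)"
    using exists_antiderivative by blast
  let ?F = "\<lambda>j. case j of 0 \<Rightarrow> G | Suc j \<Rightarrow> F j"
  have "deriv_chain (Suc n + k) ?F"
    using G F(1) by (auto simp: deriv_chain_def less_Suc_eq_0_disj)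
  then show ?case
    using F(2,3) by (intro exI[of _ ?F]) simp
qed

lemma exists_deriv_chain_quadratic:
  "\<exists>F. deriv_chain (n + 2) F \<and> F n = (\<lambda>x. a + b * x + c * x\<^sup>2) \<and> F (n + 2) = (\<lambda>x. 2 * c)"
proof -
  let ?H = "\<lambda>(j::nat) (x::real). if j = 0 then a + b * x + c * x\<^sup>2 else if j = 1 then b + 2 * c * x else 2 * c"
  have "deriv_chain 2 ?H"
    by (auto simp: deriv_chain_def less_2_cases_iff intro!: derivative_eq_intros)
  then obtain F where F: "deriv_chain (n + 2) F" "\<forall>j\<le>2. F (n + j) = ?H j"
    using exists_deriv_chain_extending[of 2 ?H n] by auto
  have "F n = ?H 0" "F (n + 2) = ?H 2"
    using F(2)[rule_format, of 0] F(2)[rule_format, of 2] by simp_all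
  with F(1) show ?thesis
    by auto
qed

text \<open>Telescoping \<open>u s - u (s / 2\<^sup>k)\<close> along the steps \<open>s / 2\<^sup>j\<close> turns the bounds on single steps into
a geometric series of ratio \<open>1 / 4\<close>; hence the factor \<open>1 / 3\<close>.\<close>

lemma abs_le_by_doubling_steps:
  fixes u :: "real \<Rightarrow> real"
  assumes u0: "(u \<longlongrightarrow> 0) (at 0)" and "s \<noteq> 0"
    and step: "\<And>x. x \<noteq> 0 \<Longrightarrow> \<bar>x\<bar> \<le> \<bar>s\<bar> \<Longrightarrow> \<bar>u (2 * x) - u x - l * x\<^sup>2\<bar> \<le> r * x\<^sup>2"
  shows "\<bar>u s - l * (s\<^sup>2 / 3)\<bar> \<le> r * (s\<^sup>2 / 3)"
proof -
  define x where "x j = s / 2 ^ Suc j" for j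
  have x: "x j \<noteq> 0" "\<bar>x j\<bar> \<le> \<bar>s\<bar>" for j
  proof -
    have "(1::real) \<le> 2 ^ Suc j"
      by (rule one_le_power) simp
    then have "\<bar>s\<bar> / 2 ^ Suc j \<le> \<bar>s\<bar> / 1"
      by (intro divide_left_mono) auto
    then show "x j \<noteq> 0" "\<bar>x j\<bar> \<le> \<bar>s\<bar>"
      using \<open>s \<noteq> 0\<close> by (auto simp: x_def)
  qed
  have partial: "\<bar>u s - u (s / 2 ^ k) - l * (\<Sum>j<k. (x j)\<^sup>2)\<bar> \<le> r * (\<Sum>j<k. (x j)\<^sup>2)" for k
  proof -
    have "u s - u (s / 2 ^ k) = (\<Sum>j<k. u (2 * x j) - u (x j))"
      using sum_lessThan_telescope'[of "\<lambda>j. u (s / 2 ^ j)" k] by (simp add: x_def)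
    then have "\<bar>u s - u (s / 2 ^ k) - l * (\<Sum>j<k. (x j)\<^sup>2)\<bar> = \<bar>\<Sum>j<k. u (2 * x j) - u (x j) - l * (x j)\<^sup>2\<bar>"
      by (simp add: sum_subtractf sum_distrib_left)
    also have "\<dots> \<le> (\<Sum>j<k. r * (x j)\<^sup>2)"
      by (rule order_trans[OF sum_abs sum_mono]) (rule step[OF x])
    finally show ?thesis by (simp add: sum_distrib_left)
  qed
  have "(\<lambda>j. (s\<^sup>2 / 4) * (1 / 4) ^ j) sums ((s\<^sup>2 / 4) * (1 / (1 - 1 / 4)))"
    by (intro sums_mult geometric_sums) simp
  moreover have "((2::real) ^ j)\<^sup>2 = 4 ^ j" for j
    by (induction j) (simp_all add: power2_eq_square)
  ultimately have geom: "(\<lambda>k. \<Sum>j<k. (x j)\<^sup>2) \<longlonglongrightarrow> s\<^sup>2 / 3"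
    by (simp add: sums_def x_def power_divide power_mult_distrib power_one_over field_simps)
  have "(\<lambda>k. s / 2 ^ k) \<longlonglongrightarrow> 0"
    by (intro LIMSEQ_divide_realpow_zero) auto
  then have "(\<lambda>k. u (s / 2 ^ k)) \<longlonglongrightarrow> 0"
    using u0 \<open>s \<noteq> 0\<close> unfolding tendsto_at_iff_sequentially comp_def by auto
  then have lim: "(\<lambda>k. r * (\<Sum>j<k. (x j)\<^sup>2) - \<bar>u s - u (s / 2 ^ k) - l * (\<Sum>j<k. (x j)\<^sup>2)\<bar>)
      \<longlonglongrightarrow> r * (s\<^sup>2 / 3) - \<bar>u s - 0 - l * (s\<^sup>2 / 3)\<bar>"
    by (intro tendsto_intros geom)
  have "0 \<le> r * (s\<^sup>2 / 3) - \<bar>u s - 0 - l * (s\<^sup>2 / 3)\<bar>"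
    by (rule LIMSEQ_le_const[OF lim]) (use partial in auto)
  then show ?thesis
    by simp
qed

lemma tendsto_over_square_by_doubling:
  fixes u :: "real \<Rightarrow> real"
  assumes u0: "(u \<longlongrightarrow> 0) (at 0)"
    and ud: "((\<lambda>s. (u (2 * s) - u s) / s\<^sup>2) \<longlongrightarrow> l) (at 0)"
  shows "((\<lambda>s. u s / s\<^sup>2) \<longlongrightarrow> l / 3) (at 0)"
proof (rule LIM_I)
  fix r :: real
  assume r: "0 < r"
  obtain d where d: "0 < d" "\<And>x. x \<noteq> 0 \<Longrightarrow> \<bar>x\<bar> < d \<Longrightarrow> \<bar>(u (2 * x) - u x) / x\<^sup>2 - l\<bar> < r"
    using LIM_D[OF ud r] by auto
  have step: "\<bar>u (2 * x) - u x - l * x\<^sup>2\<bar> \<le> r * x\<^sup>2" if "x \<noteq> 0" "\<bar>x\<bar> < d" for x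
  proof -
    have "\<bar>(u (2 * x) - u x - l * x\<^sup>2) / x\<^sup>2\<bar> \<le> r"
      using d(2)[OF that] that(1) by (simp add: diff_divide_distrib)
    then show ?thesis using that(1) by (simp add: abs_div divide_le_eq)
  qed
  show "\<exists>d>0. \<forall>s. s \<noteq> 0 \<and> norm (s - 0) < d \<longrightarrow> norm (u s / s\<^sup>2 - l / 3) < r"
  proof (intro exI[of _ d] conjI allI impI)
    fix s :: real
    assume s: "s \<noteq> 0 \<and> norm (s - 0) < d"
    then have "\<bar>u (2 * x) - u x - l * x\<^sup>2\<bar> \<le> r * x\<^sup>2" if "x \<noteq> 0" "\<bar>x\<bar> \<le> \<bar>s\<bar>" for x
      using that by (intro step) auto
    then have "\<bar>u s - l * (s\<^sup>2 / 3)\<bar> \<le> r * (s\<^sup>2 / 3)"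
      using s by (intro abs_le_by_doubling_steps[OF u0]) auto
    then have "\<bar>u s / s\<^sup>2 - l / 3\<bar> \<le> r / 3"
      using s by (simp add: field_simps abs_div divide_le_eq)
    then show "norm (u s / s\<^sup>2 - l / 3) < r"
      using r by simp
  qed (use d in auto)
qed

definition no_quadratic_local_max :: "(real \<Rightarrow> real) \<Rightarrow> bool" where
  "no_quadratic_local_max Y \<longleftrightarrow> (\<forall>e>0. \<forall>c0 c1 t. \<not> (\<exists>d>0. \<forall>x. \<bar>x - t\<bar> < d \<longrightarrow>
      Y x - c0 - c1 * x + e * x\<^sup>2 \<le> Y t - c0 - c1 * t + e * t\<^sup>2))"

lemma below_chord_if_no_quadratic_local_max:
  assumes cY: "continuous_on UNIV Y" and nomax: "no_quadratic_local_max Y"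
    and x: "a < x" "x < b"
  shows "Y x \<le> Y a + (Y b - Y a) / (b - a) * (x - a)"
proof (rule ccontr)
  define m where "m = (Y b - Y a) / (b - a)"
  define \<eta> where "\<eta> = Y x - (Y a + m * (x - a))"
  assume "\<not> ?thesis"
  then have \<eta>: "0 < \<eta>" by (simp add: \<eta>_def m_def)
  define e where "e = \<eta> / ((b - a)\<^sup>2 + 1)"
  have e: "0 < e" using \<eta> by (simp add: e_def add_nonneg_pos)
  \<comment> \<open>\<open>Z\<close> vanishes at \<open>a\<close> and \<open>b\<close> but not at \<open>x\<close>, so it has an interior maximum on \<open>[a, b]\<close>.\<close>
  define Z where "Z y = Y y - (Y a + m * (y - a)) + e * ((y - a) * (y - b))" for y
  have "continuous_on {a..b} Z"
    unfolding Z_def using cY by (intro continuous_intros) (auto intro: continuous_on_subset)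
  then obtain t where t: "t \<in> {a..b}" "\<And>y. y \<in> {a..b} \<Longrightarrow> Z y \<le> Z t"
    using continuous_attains_sup[OF compact_Icc _ \<open>continuous_on {a..b} Z\<close>] x by auto
  have "Z a = 0" "Z b = 0" using x by (simp_all add: Z_def m_def field_simps)
  have "e * ((x - a) * (b - x)) \<le> e * (b - a)\<^sup>2"
    using x e by (intro mult_left_mono) (auto simp: power2_eq_square intro!: mult_mono)
  also have "\<dots> < e * ((b - a)\<^sup>2 + 1)"
    using e by simp
  also have "\<dots> = \<eta>"
    using add_nonneg_pos[OF zero_le_power2[of "b - a"] zero_less_one] by (simp add: e_def)
  finally have "0 < Z x" by (simp add: Z_def \<eta>_def algebra_simps)
  then have "0 < Z t" using t(2)[of x] x by simp
  then have "a < t" "t < b"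
    using t(1) \<open>Z a = 0\<close> \<open>Z b = 0\<close> by (auto simp: order.order_iff_strict)
  then have "\<forall>y. \<bar>y - t\<bar> < min (t - a) (b - t) \<longrightarrow>
      Y y - (Y a - m * a + e * a * b) - (m + e * (a + b)) * y + e * y\<^sup>2
      \<le> Y t - (Y a - m * a + e * a * b) - (m + e * (a + b)) * t + e * t\<^sup>2"
  proof (intro allI impI)
    fix y
    assume "\<bar>y - t\<bar> < min (t - a) (b - t)"
    then have "Z y \<le> Z t" by (intro t(2)) (auto simp: abs_less_iff)
    then show "Y y - (Y a - m * a + e * a * b) - (m + e * (a + b)) * y + e * y\<^sup>2
      \<le> Y t - (Y a - m * a + e * a * b) - (m + e * (a + b)) * t + e * t\<^sup>2"
      by (simp add: Z_def algebra_simps power2_eq_square)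
  qed
  moreover have "0 < min (t - a) (b - t)" using \<open>a < t\<close> \<open>t < b\<close> by simp
  ultimately show False
    using nomax e unfolding no_quadratic_local_max_def by blast
qed

lemma affine_if_no_quadratic_local_extremum:
  assumes "continuous_on UNIV Y" "no_quadratic_local_max Y" "no_quadratic_local_max (\<lambda>x. - Y x)"
  shows "Y x = Y 0 + (Y 1 - Y 0) * x"
proof -
  have chord: "Y y = Y a + (Y b - Y a) / (b - a) * (y - a)" if "a < y" "y < b" for a b y
  proof -
    have up: "Y y \<le> Y a + (Y b - Y a) / (b - a) * (y - a)"
      by (rule below_chord_if_no_quadratic_local_max[OF assms(1,2) that])
    have lo: "- Y y \<le> - Y a + (- Y b - - Y a) / (b - a) * (y - a)"
      by (rule below_chord_if_no_quadratic_local_max[OF _ assms(3) that])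
        (use assms(1) in \<open>intro continuous_intros\<close>)
    have eq: "(- Y b - - Y a) / (b - a) * (y - a) = - ((Y b - Y a) / (b - a) * (y - a))"
      by (simp add: diff_divide_distrib algebra_simps)
    show ?thesis using up lo[unfolded eq] by linarith
  qed
  define a where "a = - \<bar>x\<bar> - 1"
  define b where "b = \<bar>x\<bar> + 2"
  have "a < 0" "0 < b" "a < 1" "1 < b" "a < x" "x < b"
    by (auto simp: a_def b_def)
  moreover define m where "m = (Y b - Y a) / (b - a)"
  ultimately have "Y 0 = Y a - m * a" "Y 1 = Y a + m * (1 - a)" "Y x = Y a + m * (x - a)"
    using chord[of a 0 b] chord[of a 1 b] chord[of a x b] by simp_all
  then have "Y 1 - Y 0 = m" "Y x = Y 0 + m * x"
    by (simp_all add: algebra_simps)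
  then show ?thesis by simp
qed

section \<open>Difference stencils\<close>

text \<open>The difference operator with symbol \<open>p\<close>, step \<open>s\<close> and base point \<open>t - d s\<close>.\<close>

definition stencil :: "real \<Rightarrow> real poly \<Rightarrow> real \<Rightarrow> (real \<Rightarrow> real) \<Rightarrow> real \<Rightarrow> real" where
  "stencil s p d g t = (\<Sum>i\<le>degree p. coeff p i * g (t + (real i - d) * s))"

lemma sum_coeff_degree_le:
  fixes p :: "real poly"
  assumes "degree p \<le> N"
  shows "(\<Sum>i\<le>N. coeff p i * F i) = (\<Sum>i\<le>degree p. coeff p i * F i)"
proof (rule sum.mono_neutral_right)
  show "\<forall>i\<in>{..N} - {..degree p}. coeff p i * F i = 0"
    by (simp add: coeff_eq_0)
qed (use assms in auto)

lemma stencil_degree_le: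
  "degree p \<le> N \<Longrightarrow> stencil s p d g t = (\<Sum>i\<le>N. coeff p i * g (t + (real i - d) * s))"
  unfolding stencil_def by (rule sum_coeff_degree_le[symmetric])

lemma stencil_0 [simp]: "stencil s 0 d g t = 0"
  by (simp add: stencil_def)

lemma stencil_pCons: "stencil s (pCons a p) d g t = a * g (t - d * s) + stencil s p d g (t + s)"
proof -
  have "stencil s (pCons a p) d g t = (\<Sum>i\<le>Suc (degree p). coeff (pCons a p) i * g (t + (real i - d) * s))"
    by (rule stencil_degree_le) (simp add: degree_pCons_le)
  also have "\<dots> = a * g (t - d * s) + (\<Sum>i\<le>degree p. coeff p i * g (t + (real (Suc i) - d) * s))"
    by (subst sum.atMost_Suc_shift) simp
  also have "(\<Sum>i\<le>degree p. coeff p i * g (t + (real (Suc i) - d) * s)) = stencil s p d g (t + s)"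
    unfolding stencil_def by (intro sum.cong refl) (simp add: algebra_simps)
  finally show ?thesis .
qed

lemma stencil_add: "stencil s (p + q) d g t = stencil s p d g t + stencil s q d g t"
proof -
  let ?N = "max (degree p) (degree q)"
  have "stencil s (p + q) d g t = (\<Sum>i\<le>?N. coeff (p + q) i * g (t + (real i - d) * s))"
    by (rule stencil_degree_le) (simp add: degree_add_le)
  also have "\<dots> = (\<Sum>i\<le>?N. coeff p i * g (t + (real i - d) * s)) + (\<Sum>i\<le>?N. coeff q i * g (t + (real i - d) * s))"
    by (simp add: sum.distrib distrib_right)
  also have "\<dots> = stencil s p d g t + stencil s q d g t"
    by (simp add: stencil_degree_le[symmetric])
  finally show ?thesis .
qed

lemma stencil_smult: "stencil s (smult c p) d g t = c * stencil s p d g t"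
proof -
  have "stencil s (smult c p) d g t = (\<Sum>i\<le>degree p. coeff (smult c p) i * g (t + (real i - d) * s))"
    by (rule stencil_degree_le) simp
  then show ?thesis by (simp add: stencil_def sum_distrib_left mult_ac)
qed

lemma stencil_diff: "stencil s (p - q) d g t = stencil s p d g t - stencil s q d g t"
  using stencil_add[of s p "smult (-1) q" d g t] stencil_smult[of s "-1" q d g t] by simp

lemma stencil_shift: "stencil s p (d - 1) g t = stencil s p d g (t + s)"
  unfolding stencil_def by (intro sum.cong refl) (simp add: algebra_simps)

lemma stencil_pCons_0: "stencil s (pCons 0 p) d g t = stencil s p (d - 1) g t"
  by (simp add: stencil_pCons stencil_shift)

lemma stencil_linear_fun:
  "stencil s p d (\<lambda>x. a * g x + b * h x) t = a * stencil s p d g t + b * stencil s p d h t"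
  unfolding stencil_def by (simp add: sum.distrib sum_distrib_left algebra_simps)

lemma stencil_diff_fun: "stencil s p d (\<lambda>x. g x - h x) t = stencil s p d g t - stencil s p d h t"
  using stencil_linear_fun[of s p d 1 g "-1" h t] by simp

lemma stencil_minus_fun: "stencil s p d (\<lambda>x. - g x) t = - stencil s p d g t"
  using stencil_linear_fun[of s p d "-1" g 0 g t] by simp

lemma stencil_mult:
  "stencil s (p * q) d g t = (\<Sum>i\<le>degree q. coeff q i * stencil s p (d - real i) g t)"
proof (induction q arbitrary: d rule: pCons_induct)
  case (pCons c q)
  have "(\<Sum>i\<le>degree (pCons c q). coeff (pCons c q) i * stencil s p (d - real i) g t)
      = (\<Sum>i\<le>Suc (degree q). coeff (pCons c q) i * stencil s p (d - real i) g t)"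
    by (rule sum_coeff_degree_le[symmetric]) (simp add: degree_pCons_le)
  also have "\<dots> = c * stencil s p d g t + (\<Sum>i\<le>degree q. coeff q i * stencil s p (d - 1 - real i) g t)"
    by (subst sum.atMost_Suc_shift) (simp add: algebra_simps)
  finally show ?case
    by (simp add: mult_pCons_right stencil_add stencil_smult stencil_pCons_0 pCons.IH)
qed simp

lemma stencil_monom_mult: "stencil s (monom 1 m * p) (d + real m) g t = stencil s p d g t"
proof (induction m arbitrary: d)
  case (Suc m)
  have "monom 1 (Suc m) * p = pCons 0 (monom 1 m * p)"
    by (simp add: monom_Suc)
  then have "stencil s (monom 1 (Suc m) * p) (d + real (Suc m)) g t = stencil s (monom 1 m * p) (d + real m) g t"
    by (simp add: stencil_pCons_0 algebra_simps)
  then show ?case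
    using Suc.IH by simp
qed simp

lemma stencil_double_step: "stencil (2 * s) p d g t = stencil s (p \<circ>\<^sub>p [:0, 0, 1:]) (2 * d) g t"
proof (induction p arbitrary: t rule: pCons_induct)
  case (pCons a p)
  have c: "pCons a p \<circ>\<^sub>p [:0, 0, 1:] = pCons a (pCons 0 (p \<circ>\<^sub>p [:0, 0, 1:]))"
    by (simp add: pcompose_pCons)
  show ?case
    unfolding c stencil_pCons stencil_pCons_0 pCons.IH[of "t + 2 * s"] by (simp add: stencil_shift algebra_simps)
qed simp

lemma stencil_fdiff: "stencil s ([:-1, 1:] ^ n) d g t = fdiff n (replicate n s) g (t - d * s)"
proof (induction n arbitrary: d)
  case 0
  then show ?case by (simp add: stencil_def)
next
  case (Suc n)
  have "[:-1, 1::real:] ^ Suc n = pCons 0 ([:-1, 1:] ^ n) - [:-1, 1:] ^ n"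
    by (simp add: mult_pCons_left)
  then have "stencil s ([:-1, 1:] ^ Suc n) d g t
      = fdiff n (replicate n s) g (t - (d - 1) * s) - fdiff n (replicate n s) g (t - d * s)"
    by (simp add: stencil_diff stencil_pCons_0 Suc.IH)
  also have "\<dots> = fdiff (Suc n) (replicate (Suc n) s) g (t - d * s)"
    by (simp add: fdiff_Suc fdiff_replicate_Suc algebra_simps del: replicate_Suc)
  finally show ?case .
qed

lemma stencil_fdiff_Suc:
  "stencil s ([:-1, 1:] ^ Suc m) d g t = fdiff (Suc m) (map ((*) s) (replicate m 1 @ [1 - d])) g t
     - fdiff (Suc m) (map ((*) s) (replicate m 1 @ [- d])) g t"
proof -
  have snoc: "fdiff (Suc m) (map ((*) s) (replicate m 1 @ [c])) g t
      = fdiff m (replicate m s) g (t + s * c) - fdiff m (replicate m s) g t" for c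
    by (simp add: fdiff_Suc nth_append fdiff_append_right)
  have "stencil s ([:-1, 1:] ^ Suc m) d g t = fdiff m (replicate m s) g (t + s * (1 - d)) - fdiff m (replicate m s) g (t + s * - d)"
    by (simp only: stencil_fdiff) (simp add: fdiff_Suc fdiff_replicate_Suc algebra_simps del: replicate_Suc)
  then show ?thesis
    by (simp only: snoc)
qed

lemma stencil_quotient_tendsto:
  assumes "\<And>c. ((\<lambda>s. fdiff (Suc m) (map ((*) s) (replicate m 1 @ [c])) g t / s ^ Suc m) \<longlongrightarrow> E c) (at 0)"
  shows "((\<lambda>s. stencil s ([:-1, 1:] ^ Suc m * q) d g t / s ^ Suc m)
     \<longlongrightarrow> (\<Sum>i\<le>degree q. coeff q i * (E (1 - (d - real i)) - E (- (d - real i))))) (at 0)"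
proof -
  have "stencil s ([:-1, 1:] ^ Suc m * q) d g t / s ^ Suc m = (\<Sum>i\<le>degree q. coeff q i *
      (fdiff (Suc m) (map ((*) s) (replicate m 1 @ [1 - (d - real i)])) g t / s ^ Suc m
       - fdiff (Suc m) (map ((*) s) (replicate m 1 @ [- (d - real i)])) g t / s ^ Suc m))" for s
    by (simp only: stencil_mult stencil_fdiff_Suc sum_divide_distrib diff_divide_distrib[symmetric] times_divide_eq_right)
  then show ?thesis
    by (simp only:) (intro tendsto_sum tendsto_mult_left tendsto_diff assms)
qed

lemma stencil_quotient_tendsto_deriv:
  assumes "deriv_chain (Suc m) G" "continuous_on UNIV (G (Suc m))"
  shows "((\<lambda>s. stencil s ([:-1, 1:] ^ Suc m * q) d (G 0) t / s ^ Suc m) \<longlongrightarrow> poly q 1 * G (Suc m) t) (at 0)"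
proof -
  have "((\<lambda>s. fdiff (Suc m) (map ((*) s) (replicate m 1 @ [c])) (G 0) t / s ^ Suc m) \<longlongrightarrow> c * G (Suc m) t) (at 0)" for c
    using fdiff_quotient_tendsto_deriv[OF assms, of "replicate m 1 @ [c]" t] by simp
  note lim = stencil_quotient_tendsto[where E = "\<lambda>c. c * G (Suc m) t", OF this, of q d]
  have "(1 - (d - real i)) * G (Suc m) t - - (d - real i) * G (Suc m) t = G (Suc m) t" for i
    by (simp add: algebra_simps)
  then show ?thesis
    using lim by (simp add: poly_altdef sum_distrib_right)
qed

lemma stencil_quotient_tendsto_continuous:
  assumes "\<And>c. \<exists>e. continuous_on UNIV e \<and>
      (\<forall>t. ((\<lambda>s. fdiff (Suc m) (map ((*) s) (replicate m 1 @ [c])) g t / s ^ Suc m) \<longlongrightarrow> e t) (at 0))"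
  shows "\<exists>E. continuous_on UNIV E \<and> (\<forall>t. ((\<lambda>s. stencil s ([:-1, 1:] ^ Suc m * q) d g t / s ^ Suc m) \<longlongrightarrow> E t) (at 0))"
proof -
  from assms have "\<forall>c. \<exists>e. continuous_on UNIV e \<and>
      (\<forall>t. ((\<lambda>s. fdiff (Suc m) (map ((*) s) (replicate m 1 @ [c])) g t / s ^ Suc m) \<longlongrightarrow> e t) (at 0))"
    by blast
  then obtain e where e: "\<And>c. continuous_on UNIV (e c)"
    "\<And>c t. ((\<lambda>s. fdiff (Suc m) (map ((*) s) (replicate m 1 @ [c])) g t / s ^ Suc m) \<longlongrightarrow> e c t) (at 0)"
    using choice[of "\<lambda>c e. continuous_on UNIV e \<and> (\<forall>t. ((\<lambda>s. fdiff (Suc m) (map ((*) s) (replicate m 1 @ [c])) g t / s ^ Suc m) \<longlongrightarrow> e t) (at 0))"]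
    by blast
  let ?E = "\<lambda>t. \<Sum>i\<le>degree q. coeff q i * (e (1 - (d - real i)) t - e (- (d - real i)) t)"
  have "continuous_on UNIV ?E"
    by (intro continuous_on_sum continuous_on_mult_left continuous_on_diff e(1))
  then show ?thesis
    using stencil_quotient_tendsto[OF e(2)] by blast
qed

section \<open>Doubling stencils and smoothness in one variable\<close>

lemma pcompose_power: "(p ^ m) \<circ>\<^sub>p q = (p \<circ>\<^sub>p q) ^ m"
  by (induction m) (simp_all add: pcompose_mult pcompose_1)

lemma monom_one_eq_power_X: "monom (1::real) k = [:0, 1:] ^ k"
  by (simp add: monom_altdef)

lemma smult_power_X: "smult ((c::real) ^ k) ([:0, 1:] ^ k) = [:0, c:] ^ k"
  using smult_power[of c "[:0, 1:]" k] by simp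

lemma doubling_identity_avg:
  "[:1/2, 0, 1/2:] \<circ>\<^sub>p [:0, 0, 1:] - monom 1 1 * [:1/2, 0, 1/2:] = [:-1, 1:] ^ 2 * [:1/2, 1/2, 1/2::real:]"
  by (simp add: pcompose_pCons monom_Suc mult_pCons_left mult_pCons_right numeral_2_eq_2)

definition even_quotient :: "nat \<Rightarrow> real poly" where
  "even_quotient k = (\<Sum>i<k. [:0, 4:] ^ (k - Suc i) * ([:1, 1:] ^ 2) ^ i)"

lemma even_quotient_identity: "[:1, 1:] ^ (2 * k) - [:0, 4:] ^ k = [:-1, 1:] ^ 2 * even_quotient k"
proof -
  have "[:1, 1::real:] ^ (2 * k) = ([:1, 1:] ^ 2) ^ k" by (simp add: power_mult)
  moreover have "([:1, 1:] ^ 2) ^ k - [:0, 4:] ^ k = ([:1, 1:] ^ 2 - [:0, 4:]) * even_quotient k"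
    unfolding even_quotient_def by (rule power_diff_sumr2)
  moreover have "[:1, 1::real:] ^ 2 - [:0, 4:] = [:-1, 1:] ^ 2"
    by (simp add: power2_eq_square mult_pCons_left mult_pCons_right)
  ultimately show ?thesis by simp
qed

lemma poly_even_quotient_1: "poly (even_quotient k) 1 = real k * 4 ^ (k - 1)"
proof -
  have "poly (even_quotient k) 1 = (\<Sum>i<k. (4::real) ^ (k - Suc i) * 4 ^ i)"
    unfolding even_quotient_def by (simp add: poly_sum poly_power power2_eq_square)
  also have "\<dots> = (\<Sum>i<k. (4::real) ^ (k - 1))"
    by (intro sum.cong refl) (simp add: power_add[symmetric])
  finally show ?thesis by simp
qed

lemma doubling_identity_even:
  assumes "L = 2 * k"
  shows "[:-1, 1:] ^ L \<circ>\<^sub>p [:0, 0, 1:] - smult (2 ^ L) (monom 1 k * [:-1, 1:] ^ L)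
     = [:-1, 1:] ^ (L + 2) * even_quotient k"
proof -
  have compose_X_minus_1: "[:-1, 1::real:] \<circ>\<^sub>p [:0, 0, 1:] = [:-1, 1:] * [:1, 1:]"
    by (simp add: pcompose_pCons mult_pCons_left mult_pCons_right)
  have compose: "[:-1, 1::real:] ^ L \<circ>\<^sub>p [:0, 0, 1:] = [:-1, 1:] ^ L * [:1, 1:] ^ (2 * k)"
    unfolding pcompose_power compose_X_minus_1 power_mult_distrib assms ..
  have pow2_L: "(2::real) ^ L = 4 ^ k" by (simp add: assms power_mult)
  have scaled: "smult (2 ^ L) (monom 1 k * [:-1, 1:] ^ L) = [:-1, 1::real:] ^ L * [:0, 4:] ^ k"
    unfolding pow2_L monom_one_eq_power_X mult_smult_left[symmetric] smult_power_X by (rule mult.commute)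
  have "[:-1, 1:] ^ L \<circ>\<^sub>p [:0, 0, 1:] - smult (2 ^ L) (monom 1 k * [:-1, 1:] ^ L)
      = [:-1, 1:] ^ L * ([:1, 1:] ^ (2 * k) - [:0, 4::real:] ^ k)"
    unfolding compose scaled right_diff_distrib ..
  also have "\<dots> = [:-1, 1:] ^ (L + 2) * even_quotient k"
    unfolding even_quotient_identity power_add mult.assoc ..
  finally show ?thesis .
qed

definition odd_quotient :: "nat \<Rightarrow> real poly" where
  "odd_quotient k = [:1, 1:] * ([:1, 0, 1:] * even_quotient k + [:0, 4:] ^ k)"

lemma doubling_identity_odd:
  assumes "L = 2 * k + 1"
  shows "([:-1, 1:] ^ L * [:1, 1:]) \<circ>\<^sub>p [:0, 0, 1:] - smult (2 ^ L) (monom 1 (k + 1) * ([:-1, 1:] ^ L * [:1, 1:]))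
     = [:-1, 1:] ^ (L + 2) * odd_quotient k"
proof -
  have compose_X_minus_1: "[:-1, 1::real:] \<circ>\<^sub>p [:0, 0, 1:] = [:-1, 1:] * [:1, 1:]"
    by (simp add: pcompose_pCons mult_pCons_left mult_pCons_right)
  have compose_X_plus_1: "[:1, 1::real:] \<circ>\<^sub>p [:0, 0, 1:] = [:1, 0, 1:]"
    by (simp add: pcompose_pCons)
  have compose: "([:-1, 1::real:] ^ L * [:1, 1:]) \<circ>\<^sub>p [:0, 0, 1:] = ([:-1, 1:] ^ L * [:1, 1:]) * ([:1, 1:] ^ (2 * k) * [:1, 0, 1:])"
  proof -
    have "([:-1, 1::real:] ^ L * [:1, 1:]) \<circ>\<^sub>p [:0, 0, 1:] = ([:-1, 1:] * [:1, 1:]) ^ L * [:1, 0, 1:]"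
      unfolding pcompose_mult pcompose_power compose_X_minus_1 compose_X_plus_1 ..
    also have "\<dots> = [:-1, 1:] ^ L * [:1, 1:] ^ (2 * k + 1) * [:1, 0, 1:]"
      unfolding power_mult_distrib assms ..
    also have "\<dots> = ([:-1, 1:] ^ L * [:1, 1:]) * ([:1, 1:] ^ (2 * k) * [:1, 0, 1:])"
      by (simp only: power_add power_one_right mult_ac)
    finally show ?thesis .
  qed
  have pow2_L: "(2::real) ^ L = 2 * 4 ^ k" by (simp add: assms power_mult power_add)
  have double_X: "[:0, 2::real:] = smult 2 [:0, 1:]" by simp
  have scaled: "smult (2 ^ L) (monom 1 (k + 1) * ([:-1, 1:] ^ L * [:1, 1:]))
      = ([:-1, 1::real:] ^ L * [:1, 1:]) * ([:0, 4:] ^ k * [:0, 2:])"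
  proof -
    have "smult (2 ^ L) (monom 1 (k + 1) * ([:-1, 1:] ^ L * [:1, 1:]))
       = smult (4 ^ k) ([:0, 1:] ^ k) * smult 2 [:0, 1::real:] * ([:-1, 1:] ^ L * [:1, 1:])"
      unfolding pow2_L monom_one_eq_power_X power_add power_one_right
      by (simp only: mult_smult_left mult_smult_right smult_smult mult.assoc)
    also have "\<dots> = ([:-1, 1::real:] ^ L * [:1, 1:]) * ([:0, 4:] ^ k * [:0, 2:])"
      unfolding smult_power_X double_X[symmetric] by (simp only: mult_ac)
    finally show ?thesis .
  qed
  have regroup: "[:1, 1:] ^ (2 * k) * [:1, 0, 1:] - [:0, 4:] ^ k * [:0, 2::real:]
      = [:1, 0, 1:] * ([:1, 1:] ^ (2 * k) - [:0, 4:] ^ k) + [:0, 4:] ^ k * ([:1, 0, 1:] - [:0, 2:])"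
    by (simp only: right_diff_distrib mult_ac diff_add_eq add_diff_cancel_left')
  have square_X_minus_1: "[:1, 0, 1:] - [:0, 2::real:] = [:-1, 1:] ^ 2"
    by (simp add: power2_eq_square mult_pCons_left mult_pCons_right)
  have "([:-1, 1:] ^ L * [:1, 1:]) \<circ>\<^sub>p [:0, 0, 1:] - smult (2 ^ L) (monom 1 (k + 1) * ([:-1, 1:] ^ L * [:1, 1:]))
      = ([:-1, 1:] ^ L * [:1, 1:]) * ([:1, 1:] ^ (2 * k) * [:1, 0, 1:] - [:0, 4:] ^ k * [:0, 2::real:])"
    unfolding compose scaled right_diff_distrib ..
  also have "\<dots> = ([:-1, 1:] ^ L * [:1, 1:]) * ([:-1, 1:] ^ 2 * ([:1, 0, 1:] * even_quotient k + [:0, 4:] ^ k))"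
    unfolding regroup square_X_minus_1 even_quotient_identity by (simp only: distrib_left mult_ac)
  also have "\<dots> = [:-1, 1:] ^ (L + 2) * odd_quotient k"
    unfolding odd_quotient_def power_add by (simp only: mult_ac)
  finally show ?thesis .
qed

lemma poly_odd_quotient_1: "0 < poly (odd_quotient k) 1"
  by (simp add: odd_quotient_def poly_even_quotient_1 add_nonneg_pos)

lemma stencil_fdiff_mean_value:
  assumes "deriv_chain L G" "0 \<le> d"
  shows "\<exists>x. \<bar>x - t\<bar> \<le> (real L + d) * \<bar>s\<bar> \<and> stencil s ([:-1, 1:] ^ L) d (G 0) t = s ^ L * G L x"
proof -
  obtain x where x: "\<bar>x - (t - d * s)\<bar> \<le> real L * \<bar>s\<bar>"
    "fdiff L (replicate L s) (G 0) (t - d * s) = s ^ L * G L x"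
    using fdiff_mean_value[OF assms(1), of "replicate L s" "t - d * s"]
    by (auto simp: sum_list_replicate prod_list_replicate)
  have "\<bar>x - t\<bar> \<le> \<bar>x - (t - d * s)\<bar> + d * \<bar>s\<bar>"
    using abs_triangle_ineq4[of "x - (t - d * s)" "d * s"] assms(2) by (simp add: abs_mult)
  also have "\<dots> \<le> (real L + d) * \<bar>s\<bar>"
    using x(1) by (simp add: algebra_simps)
  finally show ?thesis
    using x(2) by (auto simp: stencil_fdiff)
qed

text \<open>A doubling stencil of order \<open>L\<close>: applied to a \<open>C\<^sup>L\<close> function, \<open>B\<close> returns \<open>s\<^sup>L\<close> times a
positive two-point average of the \<open>L\<close>-th derivative near \<open>t\<close>, while \<open>B\<close> at step \<open>2s\<close> minus
\<open>2\<^sup>L\<close> times \<open>B\<close> at step \<open>s\<close> is a multiple of \<open>\<delta>\<^sup>L\<^sup>+\<^sup>2\<close>. Comparing the two scales turns a limit of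
\<open>(L + 2)\<close>-th differences into a second-order condition on the \<open>L\<close>-th derivative, which a
maximum principle exploits.\<close>

locale doubling_stencil =
  fixes L :: nat and B Q :: "real poly" and dB :: nat and w R :: real
  assumes doubling_identity:
      "B \<circ>\<^sub>p [:0, 0, 1:] - smult (2 ^ L) (monom 1 dB * B) = [:-1, 1:] ^ Suc (Suc L) * Q"
    and poly_Q_pos: "0 < poly Q 1"
    and w_pos: "0 < w"
    and R_nonneg: "0 \<le> R"
    and mean_value: "\<And>G s t. deriv_chain L G \<Longrightarrow> \<exists>x1 x2. \<bar>x1 - t\<bar> \<le> R * \<bar>s\<bar> \<and> \<bar>x2 - t\<bar> \<le> R * \<bar>s\<bar> \<and>
        stencil s B (real dB) (G 0) t = s ^ L * (w * (G L x1 + G L x2))"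

text \<open>The instances: for \<open>L = 0\<close> the average \<open>(g (t - s) + g (t + s)) / 2\<close>, for \<open>L = 2k\<close> the
centred difference \<open>\<delta>\<^sup>L\<close> based at \<open>t - k s\<close>, and for \<open>L = 2k + 1\<close> the sum of the differences \<open>\<delta>\<^sup>L\<close>
based at \<open>t - (k + 1) s\<close> and \<open>t - k s\<close>.\<close>

lemma doubling_stencil_avg: "doubling_stencil 0 [:1/2, 0, 1/2:] [:1/2, 1/2, 1/2:] 1 (1/2) 1"
proof
  fix G :: "nat \<Rightarrow> real \<Rightarrow> real" and s t :: real
  show "\<exists>x1 x2. \<bar>x1 - t\<bar> \<le> 1 * \<bar>s\<bar> \<and> \<bar>x2 - t\<bar> \<le> 1 * \<bar>s\<bar> \<and>
      stencil s [:1/2, 0, 1/2:] (real 1) (G 0) t = s ^ 0 * (1/2 * (G 0 x1 + G 0 x2))"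
    by (intro exI[of _ "t - s"] exI[of _ "t + s"]) (simp add: stencil_pCons algebra_simps)
qed (use doubling_identity_avg in \<open>simp_all add: numeral_2_eq_2\<close>)

lemma doubling_stencil_even:
  assumes "L = 2 * k" "1 \<le> k"
  shows "doubling_stencil L ([:-1, 1:] ^ L) (even_quotient k) k (1/2) (real L + real k)"
proof
  fix G :: "nat \<Rightarrow> real \<Rightarrow> real" and s t :: real
  assume G: "deriv_chain L G"
  obtain x where "\<bar>x - t\<bar> \<le> (real L + real k) * \<bar>s\<bar>"
    "stencil s ([:-1, 1:] ^ L) (real k) (G 0) t = s ^ L * G L x"
    using stencil_fdiff_mean_value[OF G, of "real k" t s] by auto
  then show "\<exists>x1 x2. \<bar>x1 - t\<bar> \<le> (real L + real k) * \<bar>s\<bar> \<and> \<bar>x2 - t\<bar> \<le> (real L + real k) * \<bar>s\<bar> \<and>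
      stencil s ([:-1, 1:] ^ L) (real k) (G 0) t = s ^ L * (1/2 * (G L x1 + G L x2))"
    by (intro exI[of _ x] exI[of _ x]) simp
qed (use doubling_identity_even[OF assms(1)] assms(2) in \<open>simp_all add: poly_even_quotient_1\<close>)

lemma doubling_stencil_odd:
  assumes "L = 2 * k + 1"
  shows "doubling_stencil L ([:-1, 1:] ^ L * [:1, 1:]) (odd_quotient k) (k + 1) 1 (real L + real (k + 1))"
proof
  fix G :: "nat \<Rightarrow> real \<Rightarrow> real" and s t :: real
  assume G: "deriv_chain L G"
  obtain x1 where x1: "\<bar>x1 - t\<bar> \<le> (real L + real (k + 1)) * \<bar>s\<bar>"
    "stencil s ([:-1, 1:] ^ L) (real (k + 1)) (G 0) t = s ^ L * G L x1"
    using stencil_fdiff_mean_value[OF G, of "real (k + 1)" t s] by auto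
  obtain x2 where x2: "\<bar>x2 - t\<bar> \<le> (real L + real k) * \<bar>s\<bar>"
    "stencil s ([:-1, 1:] ^ L) (real k) (G 0) t = s ^ L * G L x2"
    using stencil_fdiff_mean_value[OF G, of "real k" t s] by auto
  have "stencil s ([:-1, 1:] ^ L * [:1, 1:]) (real (k + 1)) (G 0) t
      = stencil s ([:-1, 1:] ^ L) (real (k + 1)) (G 0) t + stencil s ([:-1, 1:] ^ L) (real k) (G 0) t"
    by (simp add: stencil_add stencil_pCons_0)
  moreover have "\<bar>x2 - t\<bar> \<le> (real L + real (k + 1)) * \<bar>s\<bar>"
    using x2(1) by (rule order_trans) (simp add: mult_right_mono)
  ultimately show "\<exists>x1 x2. \<bar>x1 - t\<bar> \<le> (real L + real (k + 1)) * \<bar>s\<bar> \<and> \<bar>x2 - t\<bar> \<le> (real L + real (k + 1)) * \<bar>s\<bar> \<and>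
      stencil s ([:-1, 1:] ^ L * [:1, 1:]) (real (k + 1)) (G 0) t = s ^ L * (1 * (G L x1 + G L x2))"
    using x1 x2(2) by (intro exI[of _ x1] exI[of _ x2]) (simp add: algebra_simps)
qed (use doubling_identity_odd[OF assms] poly_odd_quotient_1 in simp_all)

lemma exists_doubling_stencil: "\<exists>B Q dB w R. doubling_stencil L B Q dB w R"
proof (cases "L = 0")
  case True
  then show ?thesis using doubling_stencil_avg by blast
next
  case False
  show ?thesis
  proof (cases "even L")
    case True
    then obtain k where "L = 2 * k" "1 \<le> k" using \<open>L \<noteq> 0\<close> by (auto elim!: evenE)
    then show ?thesis using doubling_stencil_even by blast
  next
    case False
    then obtain k where "L = 2 * k + 1" by (auto elim!: oddE)
    then show ?thesis using doubling_stencil_odd by blast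
  qed
qed

context doubling_stencil
begin

definition P :: "real poly" where
  "P = [:-1, 1:] ^ Suc (Suc L) * Q"

definition P_quotient :: "(real \<Rightarrow> real) \<Rightarrow> real \<Rightarrow> real \<Rightarrow> real" where
  "P_quotient g t s = stencil s P (2 * real dB) g t / s ^ Suc (Suc L)"

lemma P_quotient_tendsto_deriv:
  assumes "deriv_chain (Suc (Suc L)) G" "continuous_on UNIV (G (Suc (Suc L)))"
  shows "(P_quotient (G 0) t \<longlongrightarrow> poly Q 1 * G (Suc (Suc L)) t) (at 0)"
  unfolding P_quotient_def P_def using stencil_quotient_tendsto_deriv[OF assms] by simp

lemma stencil_doubling:
  "stencil s P (2 * real dB) g t = stencil (2 * s) B dB g t - 2 ^ L * stencil s B dB g t"
proof -
  have "stencil s P (2 * real dB) g t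
      = stencil s (B \<circ>\<^sub>p [:0, 0, 1:]) (2 * real dB) g t - 2 ^ L * stencil s (monom 1 dB * B) (real dB + real dB) g t"
    by (simp only: P_def doubling_identity[symmetric] stencil_diff stencil_smult mult_2)
  then show ?thesis
    by (simp only: stencil_double_step stencil_monom_mult)
qed

definition mean_defect :: "(nat \<Rightarrow> real \<Rightarrow> real) \<Rightarrow> real \<Rightarrow> real \<Rightarrow> real" where
  "mean_defect G t s = stencil s B (real dB) (G 0) t / s ^ L - 2 * w * G L t"

lemma mean_defect_mean_value:
  assumes "deriv_chain L G" "s \<noteq> 0"
  obtains x1 x2 where "\<bar>x1 - t\<bar> \<le> R * \<bar>s\<bar>" "\<bar>x2 - t\<bar> \<le> R * \<bar>s\<bar>"
    "mean_defect G t s = w * (G L x1 - G L t) + w * (G L x2 - G L t)"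
proof -
  obtain x1 x2 where x: "\<bar>x1 - t\<bar> \<le> R * \<bar>s\<bar>" "\<bar>x2 - t\<bar> \<le> R * \<bar>s\<bar>"
    "stencil s B (real dB) (G 0) t = s ^ L * (w * (G L x1 + G L x2))"
    using mean_value[OF assms(1)] by blast
  then have "mean_defect G t s = w * (G L x1 + G L x2) - 2 * w * G L t"
    using assms(2) by (simp add: mean_defect_def)
  with x show ?thesis
    by (intro that[of x1 x2]) (simp_all add: algebra_simps)
qed

lemma mean_defect_tendsto_0:
  assumes "deriv_chain L G" "continuous_on UNIV (G L)"
  shows "(mean_defect G t \<longlongrightarrow> 0) (at 0)"
proof -
  define witness where "witness s x \<longleftrightarrow> \<bar>fst x - t\<bar> \<le> \<bar>s\<bar> * R \<and> \<bar>snd x - t\<bar> \<le> \<bar>s\<bar> * R \<and>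
      stencil s B (real dB) (G 0) t = s ^ L * (w * (G L (fst x) + G L (snd x)))" for s x
  have "\<forall>s. \<exists>x. witness s x"
    using mean_value[OF assms(1)] by (fastforce simp: witness_def mult.commute)
  then obtain \<xi> where \<xi>: "\<And>s. witness s (\<xi> s)"
    using choice by blast
  have "isCont (G L) t"
    using assms(2) by (simp add: continuous_on_eq_continuous_at)
  moreover have "((\<lambda>s. fst (\<xi> s)) \<longlongrightarrow> t) (at 0)" "((\<lambda>s. snd (\<xi> s)) \<longlongrightarrow> t) (at 0)"
    using \<xi> by (auto simp: witness_def intro: tendsto_at_0_of_abs_diff_le)
  ultimately have "((\<lambda>s. w * (G L (fst (\<xi> s)) + G L (snd (\<xi> s))) - 2 * w * G L t)
      \<longlongrightarrow> w * (G L t + G L t) - 2 * w * G L t) (at 0)"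
    by (intro tendsto_intros isCont_tendsto_compose[of t "G L"])
  moreover have "\<forall>\<^sub>F s in at 0. w * (G L (fst (\<xi> s)) + G L (snd (\<xi> s))) - 2 * w * G L t = mean_defect G t s"
    using \<xi> by (auto simp: eventually_at_filter witness_def mean_defect_def)
  ultimately show ?thesis
    by (simp add: Lim_transform_eventually)
qed

lemma mean_defect_over_square_tendsto:
  assumes "deriv_chain L G" "continuous_on UNIV (G L)"
    and "(P_quotient (G 0) t \<longlongrightarrow> l) (at 0)"
  shows "((\<lambda>s. mean_defect G t s / s\<^sup>2) \<longlongrightarrow> l / 2 ^ L / 3) (at 0)"
proof (rule tendsto_over_square_by_doubling[OF mean_defect_tendsto_0[OF assms(1,2)]])
  have "(mean_defect G t (2 * s) - mean_defect G t s) / s\<^sup>2 = P_quotient (G 0) t s / 2 ^ L" for s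
    by (cases "s = 0") (simp_all only: mean_defect_def P_quotient_def stencil_doubling,
        simp_all add: field_simps power_mult_distrib power2_eq_square)
  then show "((\<lambda>s. (mean_defect G t (2 * s) - mean_defect G t s) / s\<^sup>2) \<longlongrightarrow> l / 2 ^ L) (at 0)"
    using assms(3) by (simp add: tendsto_divide)
qed

lemma not_local_max_if_stencil_limit_pos:
  assumes "deriv_chain L G" "continuous_on UNIV (G L)" "0 < l" "0 < d"
    and "(P_quotient (G 0) t \<longlongrightarrow> l) (at 0)"
  shows "\<exists>x. \<bar>x - t\<bar> < d \<and> G L t < G L x"
proof -
  have "\<forall>\<^sub>F s in at 0. 0 < mean_defect G t s / s\<^sup>2"
    using order_tendstoD(1)[OF mean_defect_over_square_tendsto[OF assms(1,2,5)]] assms(3) by simp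
  moreover have "((\<lambda>s. R * \<bar>s\<bar>) \<longlongrightarrow> R * \<bar>0\<bar>) (at (0::real))"
    by (intro tendsto_intros)
  then have "\<forall>\<^sub>F s in at 0. R * \<bar>s\<bar> < d"
    using assms(4) by (simp add: order_tendstoD(2))
  moreover have "\<forall>\<^sub>F s in at (0::real). s \<noteq> 0"
    by (simp add: eventually_at_filter)
  ultimately have "\<forall>\<^sub>F s in at 0. 0 < mean_defect G t s / s\<^sup>2 \<and> R * \<bar>s\<bar> < d \<and> s \<noteq> 0"
    by eventually_elim auto
  then obtain s where s: "0 < mean_defect G t s / s\<^sup>2" "R * \<bar>s\<bar> < d" "s \<noteq> 0"
    using eventually_happens by fastforce
  obtain x1 x2 where x: "\<bar>x1 - t\<bar> \<le> R * \<bar>s\<bar>" "\<bar>x2 - t\<bar> \<le> R * \<bar>s\<bar>"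
    "mean_defect G t s = w * (G L x1 - G L t) + w * (G L x2 - G L t)"
    using mean_defect_mean_value[OF assms(1) s(3)] by blast
  have "0 < w * (G L x1 - G L t) + w * (G L x2 - G L t)"
    using s(1) x(3) by (simp add: zero_less_divide_iff)
  then have "G L t < G L x1 \<or> G L t < G L x2"
    using w_pos by (smt (verit) mult_le_0_iff)
  then show ?thesis
    using x(1,2) s(2) by force
qed

lemma no_quadratic_local_max_if_stencil_limit_0:
  assumes X: "deriv_chain L X" "continuous_on UNIV (X L)"
    and lim: "\<And>t. (P_quotient (X 0) t \<longlongrightarrow> 0) (at 0)"
  shows "no_quadratic_local_max (X L)"
  unfolding no_quadratic_local_max_def
proof (intro allI impI notI)
  fix e c0 c1 t :: real
  assume e: "0 < e"
  assume "\<exists>d>0. \<forall>x. \<bar>x - t\<bar> < d \<longrightarrow> X L x - c0 - c1 * x + e * x\<^sup>2 \<le> X L t - c0 - c1 * t + e * t\<^sup>2"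
  then obtain d where d: "0 < d" "\<And>x. \<bar>x - t\<bar> < d \<Longrightarrow> X L x - c0 - c1 * x + e * x\<^sup>2 \<le> X L t - c0 - c1 * t + e * t\<^sup>2"
    by blast
  obtain F where F: "deriv_chain (Suc (Suc L)) F" "F L = (\<lambda>x. c0 + c1 * x + (- e) * x\<^sup>2)"
      "F (Suc (Suc L)) = (\<lambda>x. 2 * (- e))"
    using exists_deriv_chain_quadratic[of L c0 c1 "- e"] by auto
  define Z where "Z = (\<lambda>j x. X j x - F j x)"
  have "deriv_chain L (\<lambda>j x. 1 * X j x + (- 1) * F j x)"
    by (rule deriv_chain_linear[OF X(1) deriv_chain_mono[OF F(1)]]) simp
  then have Z: "deriv_chain L Z" "continuous_on UNIV (Z L)" "Z L x = X L x - c0 - c1 * x + e * x\<^sup>2" for x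
    using X(2) F(2) by (auto simp: Z_def intro!: continuous_intros)
  have "((\<lambda>s. P_quotient (X 0) t s - P_quotient (F 0) t s) \<longlongrightarrow> 0 - poly Q 1 * (2 * - e)) (at 0)"
    using P_quotient_tendsto_deriv[OF F(1)] F(3) lim[of t] by (intro tendsto_diff) auto
  moreover have "P_quotient (Z 0) t = (\<lambda>s. P_quotient (X 0) t s - P_quotient (F 0) t s)"
    by (intro ext) (simp add: P_quotient_def Z_def stencil_diff_fun diff_divide_distrib)
  ultimately have "(P_quotient (Z 0) t \<longlongrightarrow> 2 * e * poly Q 1) (at 0)"
    by (simp add: mult_ac)
  moreover have "0 < 2 * e * poly Q 1"
    using e poly_Q_pos by simp
  ultimately obtain x where "\<bar>x - t\<bar> < d" "Z L t < Z L x"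
    using not_local_max_if_stencil_limit_pos[OF Z(1,2) _ d(1)] by blast
  then show False
    using d(2) Z(3) by fastforce
qed

lemma deriv_const_if_P_quotient_limit_0:
  assumes X: "deriv_chain (Suc L) X" and lim: "\<And>t. (P_quotient (X 0) t \<longlongrightarrow> 0) (at 0)"
  shows "X (Suc L) x = X L 1 - X L 0"
proof -
  have "deriv_chain (Suc L) (\<lambda>j x. (-1) * X j x + 0 * X j x)"
    by (rule deriv_chain_linear[OF X X])
  then have mX: "deriv_chain L (\<lambda>j x. - X j x)"
    by (auto intro: deriv_chain_mono)
  have cX: "continuous_on UNIV (X L)"
    using deriv_chain_continuous[OF X] by simp
  have "P_quotient (\<lambda>x. - X 0 x) t = (\<lambda>s. - P_quotient (X 0) t s)" for t
    by (intro ext) (simp add: P_quotient_def stencil_minus_fun)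
  then have "(P_quotient (\<lambda>x. - X 0 x) t \<longlongrightarrow> - 0) (at 0)" for t
    using tendsto_minus[OF lim[of t]] by simp
  moreover have "continuous_on UNIV (\<lambda>x. - X L x)"
    using cX by (rule continuous_on_minus)
  ultimately have "no_quadratic_local_max (\<lambda>x. - X L x)"
    using no_quadratic_local_max_if_stencil_limit_0[OF mX] by simp
  moreover have "no_quadratic_local_max (X L)"
    using no_quadratic_local_max_if_stencil_limit_0[OF deriv_chain_mono[OF X] cX lim] by simp
  ultimately have "X L y = X L 0 + (X L 1 - X L 0) * y" for y
    by (intro affine_if_no_quadratic_local_extremum[OF cX])
  then have affine: "X L = (\<lambda>y. X L 0 + (X L 1 - X L 0) * y)"
    by (rule ext)
  show ?thesis
  proof (rule DERIV_unique)
    show "(X L has_real_derivative X (Suc L) x) (at x)"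
      using deriv_chainD[OF X] by simp
    show "(X L has_real_derivative X L 1 - X L 0) (at x)"
      by (subst affine) (auto intro!: derivative_eq_intros)
  qed
qed

text \<open>Subtracting a \<open>C\<^sup>L\<^sup>+\<^sup>2\<close> function with the same limit of \<open>(L + 2)\<close>-th differences leaves a function
whose \<open>(L + 1)\<close>-st derivative is constant.\<close>

lemma differentiable_top_of_P_quotient_limit:
  assumes D: "deriv_chain (Suc L) D"
    and eP: "continuous_on UNIV eP" "\<And>t. (P_quotient (D 0) t \<longlongrightarrow> eP t) (at 0)"
  shows "\<exists>h. continuous_on UNIV h \<and> (\<forall>x. (D (Suc L) has_real_derivative h x) (at x))"
proof -
  have "deriv_chain 0 (\<lambda>j x. eP x / poly Q 1)" "continuous_on UNIV (\<lambda>x. eP x / poly Q 1)"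
    using eP(1) poly_Q_pos by (auto simp: deriv_chain_def intro!: continuous_intros)
  then obtain G where G: "deriv_chain (Suc (Suc L)) G" "continuous_on UNIV (G (Suc (Suc L)))"
    "G (Suc (Suc L)) = (\<lambda>x. eP x / poly Q 1)"
    using exists_deriv_chain_extending[of 0 _ "Suc (Suc L)"] by auto
  define X where "X = (\<lambda>j x. D j x - G j x)"
  have "deriv_chain (Suc L) (\<lambda>j x. 1 * D j x + (-1) * G j x)"
    by (rule deriv_chain_linear[OF D deriv_chain_mono[OF G(1)]]) simp
  then have X: "deriv_chain (Suc L) X"
    by (simp add: X_def)
  have "P_quotient (X 0) t = (\<lambda>s. P_quotient (D 0) t s - P_quotient (G 0) t s)" for t
    by (intro ext) (simp add: P_quotient_def X_def stencil_diff_fun diff_divide_distrib)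
  moreover have "((\<lambda>s. P_quotient (D 0) t s - P_quotient (G 0) t s) \<longlongrightarrow> eP t - poly Q 1 * (eP t / poly Q 1)) (at 0)" for t
    using G P_quotient_tendsto_deriv[OF G(1,2)] eP(2) by (intro tendsto_diff) auto
  ultimately have "(P_quotient (X 0) t \<longlongrightarrow> 0) (at 0)" for t
    using poly_Q_pos by simp
  then have "D (Suc L) = (\<lambda>x. G (Suc L) x + (X L 1 - X L 0))"
    using deriv_const_if_P_quotient_limit_0[OF X] by (intro ext) (simp add: X_def algebra_simps)
  moreover have "((\<lambda>x. G (Suc L) x + c) has_real_derivative G (Suc (Suc L)) x) (at x)" for c x
    using deriv_chainD[OF G(1), of "Suc L"] by (auto intro!: derivative_eq_intros)
  ultimately show ?thesis
    using G(2) by auto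
qed

end

lemma differentiable_top_of_fdiff_limits:
  assumes D: "deriv_chain N D" "D 0 = \<phi>"
    and lim: "\<And>cs t. length cs = Suc N \<Longrightarrow> ((\<lambda>s. fdiff (Suc N) (map ((*) s) cs) \<phi> t / s ^ Suc N) \<longlongrightarrow> e cs t) (at 0)"
    and cont: "\<And>cs. length cs = Suc N \<Longrightarrow> continuous_on UNIV (e cs)"
  shows "\<exists>h. continuous_on UNIV h \<and> (\<forall>x. (D N has_real_derivative h x) (at x))"
proof (cases N)
  case 0
  have "(\<phi> has_real_derivative e [1] x) (at x)" for x
    using lim[of "[1]" x] 0 unfolding DERIV_def by (simp add: fdiff_Suc add.commute)
  then show ?thesis
    using cont[of "[1]"] D(2) 0 by auto
next
  case (Suc L)
  obtain B Q dB w R where "doubling_stencil L B Q dB w R"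
    using exists_doubling_stencil by blast
  then interpret doubling_stencil L B Q dB w R .
  have "\<exists>e'. continuous_on UNIV e' \<and> (\<forall>t. ((\<lambda>s. fdiff (Suc (Suc L)) (map ((*) s) (replicate (Suc L) 1 @ [c])) \<phi> t
      / s ^ Suc (Suc L)) \<longlongrightarrow> e' t) (at 0))" for c
    using lim[of "replicate (Suc L) 1 @ [c]"] cont[of "replicate (Suc L) 1 @ [c]"] Suc by auto
  from stencil_quotient_tendsto_continuous[OF this, of Q "2 * real dB"]
  obtain eP where "continuous_on UNIV eP" "\<And>t. (P_quotient \<phi> t \<longlongrightarrow> eP t) (at 0)"
    unfolding P_quotient_def[abs_def] P_def by blast
  with D Suc show ?thesis
    using differentiable_top_of_P_quotient_limit[of D eP] by simp
qed

theorem deriv_chain_of_fdiff_limits: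
  fixes \<phi> :: "real \<Rightarrow> real" and e :: "nat \<Rightarrow> real list \<Rightarrow> real \<Rightarrow> real"
  assumes lim: "\<And>k cs t. k \<le> N \<Longrightarrow> length cs = k \<Longrightarrow>
      ((\<lambda>s. fdiff k (map ((*) s) cs) \<phi> t / s ^ k) \<longlongrightarrow> e k cs t) (at 0)"
    and cont: "\<And>k cs. k \<le> N \<Longrightarrow> length cs = k \<Longrightarrow> continuous_on UNIV (e k cs)"
  shows "e 0 [] = \<phi>" "deriv_chain N (\<lambda>j. e j (replicate j 1))"
proof -
  show e0: "e 0 [] = \<phi>"
    using lim[of 0 "[]"] by (auto intro: LIM_unique[OF _ tendsto_const])
  show "deriv_chain N (\<lambda>j. e j (replicate j 1))"
    using lim cont
  proof (induction N)
    case 0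
    then show ?case by (simp add: deriv_chain_def)
  next
    case (Suc N)
    let ?D = "\<lambda>j. e j (replicate j 1)"
    have D: "deriv_chain N ?D" "?D 0 = \<phi>"
      using Suc e0 by auto
    obtain h where h: "continuous_on UNIV h" "\<And>x. (?D N has_real_derivative h x) (at x)"
      using differentiable_top_of_fdiff_limits[OF D] Suc.prems by blast
    define D' where "D' = (\<lambda>j. if j \<le> N then ?D j else h)"
    have D': "deriv_chain (Suc N) D'" "continuous_on UNIV (D' (Suc N))"
      using deriv_chain_snoc[OF D(1) h(2)] h(1) by (simp_all add: D'_def)
    have "h t = ?D (Suc N) t" for t
    proof -
      have "((\<lambda>s. fdiff (Suc N) (map ((*) s) (replicate (Suc N) 1)) (D' 0) t / s ^ Suc N) \<longlongrightarrow> D' (Suc N) t) (at 0)"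
        using fdiff_quotient_tendsto_deriv[OF D', of "replicate (Suc N) 1" t] by simp
      moreover have "D' 0 = \<phi>"
        using e0 by (simp add: D'_def)
      ultimately show ?thesis
        using Suc.prems(1)[of "Suc N" "replicate (Suc N) 1" t] by (auto simp: D'_def intro: LIM_unique)
    qed
    then show ?case
      using D(1) h(2) unfolding deriv_chain_def by (metis less_SucE)
  qed
qed

section \<open>Multidirectional derivatives along lines\<close>

definition md_smooth :: "nat \<Rightarrow> ('a::real_normed_vector \<Rightarrow> real) \<Rightarrow> bool" where
  "md_smooth N f \<longleftrightarrow> (\<forall>k\<le>N. md_exists k 0 (\<lambda>q ws. f q) \<and> cont_on_prod k (md k (\<lambda>q ws. f q)))"

lemma md_quot_eq_fdiff:
  assumes "n \<le> length us"
  shows "md_quot n F q us s = fdiff n (map (scaleR s) us) (\<lambda>p. F p (drop n us)) q / s ^ n"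
proof -
  have "fdiff n (map (scaleR s) (take n us) @ drop n us) G q = fdiff n (map (scaleR s) us) G q" for G
    by (rule fdiff_cong) (use assms in \<open>simp add: nth_append\<close>)
  then show ?thesis
    using assms by (simp add: md_quot_def polar_eq_fdiff divide_inverse mult.commute)
qed

lemma md_eqI:
  assumes "n \<le> length us"
    and "((\<lambda>s. fdiff n (map (scaleR s) us) (\<lambda>p. F p (drop n us)) q / s ^ n) \<longlongrightarrow> L) (at 0)"
  shows "md n F q us = L"
proof -
  have "md_quot n F q us = (\<lambda>s. fdiff n (map (scaleR s) us) (\<lambda>p. F p (drop n us)) q / s ^ n)"
    using assms(1) by (intro ext md_quot_eq_fdiff)
  then show ?thesis
    unfolding md_def using assms(2) by (simp add: tendsto_Lim)
qed

lemma md_tendsto: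
  assumes "md_exists k m F" "length us = k + m"
  shows "((\<lambda>s. fdiff k (map (scaleR s) us) (\<lambda>p. F p (drop k us)) q / s ^ k) \<longlongrightarrow> md k F q us) (at 0)"
proof -
  obtain L where "(md_quot k F q us \<longlongrightarrow> L) (at 0)"
    using assms(1,2) unfolding md_exists_def has_md_def by blast
  moreover have "md_quot k F q us = (\<lambda>s. fdiff k (map (scaleR s) us) (\<lambda>p. F p (drop k us)) q / s ^ k)"
    using assms(2) by (intro ext md_quot_eq_fdiff) simp
  ultimately show ?thesis
    using md_eqI[of k us F q L] assms(2) by simp
qed

lemma md_fun_tendsto:
  assumes "md_exists k 0 (\<lambda>q ws. f q)" "length us = k"
  shows "((\<lambda>s. fdiff k (map (scaleR s) us) f q / s ^ k) \<longlongrightarrow> md k (\<lambda>q ws. f q) q us) (at 0)"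
  using md_tendsto[OF assms(1), of us q] assms(2) by simp

lemma cont_on_prod_isCont:
  assumes "cont_on_prod k G" "length us = k"
  shows "isCont (\<lambda>y. G y us) y"
  unfolding continuous_at_eps_delta
proof (intro allI impI)
  fix e :: real
  assume "0 < e"
  then obtain d where "0 < d" "\<And>y'. dist y' y < d \<Longrightarrow> \<bar>G y' us - G y us\<bar> < e"
    using assms unfolding cont_on_prod_def by (metis dist_self)
  then show "\<exists>d>0. \<forall>y'. dist y' y < d \<longrightarrow> dist (G y' us) (G y us) < e"
    by (auto simp: dist_real_def)
qed

definition md_diag :: "('a::real_normed_vector \<Rightarrow> real) \<Rightarrow> nat \<Rightarrow> 'a \<Rightarrow> 'a \<Rightarrow> real" where
  "md_diag f j y z = md j (\<lambda>q ws. f q) y (replicate j z)"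

lemma md_diag_0: "md_diag f 0 y z = f y"
proof -
  have "md_quot 0 (\<lambda>q ws. f q) y [] = (\<lambda>s. f y)"
    by (intro ext) (simp add: md_quot_def polar_def)
  then show ?thesis
    by (simp add: md_diag_def md_def tendsto_Lim)
qed

lemma deriv_chain_md_diag:
  fixes f :: "'a::real_normed_vector \<Rightarrow> real"
  assumes H: "md_smooth N f"
  shows "deriv_chain N (\<lambda>j t. md_diag f j (p + t *\<^sub>R z) z)"
proof -
  define e where "e k cs t = md k (\<lambda>q ws. f q) (p + t *\<^sub>R z) (map (\<lambda>c. c *\<^sub>R z) cs)" for k cs t
  have "((\<lambda>s. fdiff k (map ((*) s) cs) (\<lambda>t. f (p + t *\<^sub>R z)) t / s ^ k) \<longlongrightarrow> e k cs t) (at 0)"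
    if "k \<le> N" "length cs = k" for k cs t
  proof -
    have "((\<lambda>s. fdiff k (map (scaleR s) (map (\<lambda>c. c *\<^sub>R z) cs)) f (p + t *\<^sub>R z) / s ^ k) \<longlongrightarrow> e k cs t) (at 0)"
      unfolding e_def using H[unfolded md_smooth_def] that by (intro md_fun_tendsto) auto
    then show ?thesis
      using fdiff_along_line[of k cs s z f p t for s] that by simp
  qed
  moreover have "continuous_on UNIV (e k cs)" if "k \<le> N" "length cs = k" for k cs
  proof -
    have "isCont (\<lambda>y. md k (\<lambda>q ws. f q) y (map (\<lambda>c. c *\<^sub>R z) cs)) y" for y
      using H[unfolded md_smooth_def] that by (intro cont_on_prod_isCont) auto
    then have "continuous_on UNIV (\<lambda>y. md k (\<lambda>q ws. f q) y (map (\<lambda>c. c *\<^sub>R z) cs))"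
      by (simp add: continuous_on_eq_continuous_at)
    then have "continuous_on UNIV ((\<lambda>y. md k (\<lambda>q ws. f q) y (map (\<lambda>c. c *\<^sub>R z) cs)) \<circ> (\<lambda>t. p + t *\<^sub>R z))"
      by (intro continuous_on_compose continuous_intros) (auto intro: continuous_on_subset)
    then show ?thesis
      by (simp add: e_def comp_def)
  qed
  ultimately have "deriv_chain N (\<lambda>j. e j (replicate j 1))"
    by (rule deriv_chain_of_fdiff_limits)
  moreover have "(\<lambda>j. e j (replicate j 1)) = (\<lambda>j t. md_diag f j (p + t *\<^sub>R z) z)"
    by (simp add: fun_eq_iff e_def md_diag_def)
  ultimately show ?thesis
    by simp
qed

lemma taylor_md_diag:
  fixes f :: "'a::real_normed_vector \<Rightarrow> real"
  assumes "deriv_chain N (\<lambda>j t. md_diag f j (p + t *\<^sub>R z) z)"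
  shows "\<exists>\<xi>. \<bar>\<xi>\<bar> \<le> \<bar>r\<bar> \<and> f (p + r *\<^sub>R z) =
    (\<Sum>m<N. md_diag f m p z / fact m * r ^ m) + md_diag f N (p + \<xi> *\<^sub>R z) z / fact N * r ^ N"
proof (cases "N = 0 \<or> r = 0")
  case True
  then show ?thesis
    by (intro exI[of _ r]) (auto simp: md_diag_0 lessThan_Suc_eq_insert_0 zero_power sum.reindex)
next
  case False
  then have "0 < N" "- \<bar>r\<bar> \<le> 0" "0 \<le> \<bar>r\<bar>" "- \<bar>r\<bar> \<le> r" "r \<le> \<bar>r\<bar>" "r \<noteq> 0"
    by auto
  from Taylor[of N "\<lambda>m t. md_diag f m (p + t *\<^sub>R z) z" "\<lambda>t. f (p + t *\<^sub>R z)", OF this(1) _ _ this(2-6)]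
  obtain \<xi> where "if r < 0 then r < \<xi> \<and> \<xi> < 0 else 0 < \<xi> \<and> \<xi> < r"
      "f (p + r *\<^sub>R z) = (\<Sum>m<N. md_diag f m p z * r ^ m / fact m) + md_diag f N (p + \<xi> *\<^sub>R z) z * r ^ N / fact N"
    using deriv_chainD[OF assms] by (auto simp: md_diag_0 fun_eq_iff)
  then show ?thesis
    by (intro exI[of _ \<xi>]) (auto split: if_splits)
qed

lemma md_diag_taylor_remainder:
  fixes f :: "'a::real_normed_vector \<Rightarrow> real"
  assumes C: "deriv_chain N (\<lambda>j t. md_diag f j (p + t *\<^sub>R w) w)" and "j < N"
  shows "((\<lambda>r. (f (p + r *\<^sub>R w) - (\<Sum>i\<le>j. r ^ i / fact i * md_diag f i p w)) / r ^ j) \<longlongrightarrow> 0) (at 0)"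
proof -
  have "\<forall>r. \<exists>\<xi>. \<bar>\<xi> - 0\<bar> \<le> \<bar>r\<bar> * 1 \<and> f (p + r *\<^sub>R w) =
      (\<Sum>i<j. md_diag f i p w / fact i * r ^ i) + md_diag f j (p + \<xi> *\<^sub>R w) w / fact j * r ^ j"
    using taylor_md_diag[OF deriv_chain_mono[OF C, of j]] \<open>j < N\<close> by simp
  from choice[OF this] obtain \<xi> where "\<forall>r. \<bar>\<xi> r - 0\<bar> \<le> \<bar>r\<bar> * 1 \<and> f (p + r *\<^sub>R w) =
      (\<Sum>i<j. md_diag f i p w / fact i * r ^ i) + md_diag f j (p + \<xi> r *\<^sub>R w) w / fact j * r ^ j"
    by blast
  then have \<xi>: "\<And>r. \<bar>\<xi> r - 0\<bar> \<le> \<bar>r\<bar> * 1" "\<And>r. f (p + r *\<^sub>R w) =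
      (\<Sum>i<j. md_diag f i p w / fact i * r ^ i) + md_diag f j (p + \<xi> r *\<^sub>R w) w / fact j * r ^ j"
    by auto
  have "isCont (\<lambda>t. md_diag f j (p + t *\<^sub>R w) w) 0"
    using deriv_chain_continuous[OF C \<open>j < N\<close>] by (simp add: continuous_on_eq_continuous_at)
  then have "((\<lambda>r. (md_diag f j (p + \<xi> r *\<^sub>R w) w - md_diag f j p w) / fact j)
      \<longlongrightarrow> (md_diag f j (p + 0 *\<^sub>R w) w - md_diag f j p w) / fact j) (at 0)"
    using tendsto_at_0_of_abs_diff_le[OF \<xi>(1)]
    by (intro tendsto_intros isCont_tendsto_compose[where g="\<lambda>t. md_diag f j (p + t *\<^sub>R w) w"]) auto
  moreover have "\<forall>\<^sub>F r in at 0. (md_diag f j (p + \<xi> r *\<^sub>R w) w - md_diag f j p w) / fact j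
      = (f (p + r *\<^sub>R w) - (\<Sum>i\<le>j. r ^ i / fact i * md_diag f i p w)) / r ^ j"
    by (auto simp: eventually_at_filter \<xi>(2) field_simps simp flip: lessThan_Suc_atMost)
  ultimately show ?thesis
    by (auto intro: Lim_transform_eventually)
qed

lemma fdiff_quotient_lower_tendsto_0:
  fixes f :: "'a::real_normed_vector \<Rightarrow> real"
  assumes "md_exists (Suc j) 0 (\<lambda>q ws. f q)" "Suc j \<le> length y"
  shows "((\<lambda>r. fdiff (Suc j) (map (scaleR r) y) f p / r ^ j) \<longlongrightarrow> 0) (at 0)"
proof -
  have "((\<lambda>r. r * (fdiff (Suc j) (map (scaleR r) (take (Suc j) y)) f p / r ^ Suc j))
      \<longlongrightarrow> 0 * md (Suc j) (\<lambda>q ws. f q) p (take (Suc j) y)) (at 0)"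
    using assms by (intro tendsto_mult tendsto_ident_at md_fun_tendsto) auto
  moreover have "fdiff (Suc j) (map (scaleR r) (take (Suc j) y)) f p = fdiff (Suc j) (map (scaleR r) y) f p" for r
    by (rule fdiff_cong) (use assms(2) in simp)
  ultimately show ?thesis
    by (simp add: Lim_transform_eventually eventually_at_filter)
qed

lemma fdiff_vanish_of_vanish_at_0:
  assumes h: "\<And>y. Suc j \<le> length y \<Longrightarrow> fdiff (Suc j) y h 0 = 0"
    and "Suc j \<le> m" "m \<le> length y"
  shows "fdiff m y h z = 0"
proof -
  have base: "fdiff (Suc j) y h z = 0" if "Suc j \<le> length y" for y z
  proof -
    have "fdiff j (y[j := c]) h x = fdiff j y h x" for c x
      by (rule fdiff_cong) simp
    then have "fdiff j y h (z + y ! j) - fdiff j y h 0 = 0" "fdiff j y h z - fdiff j y h 0 = 0"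
      using h[of "y[j := z + y ! j]"] h[of "y[j := z]"] that by (simp_all add: fdiff_Suc)
    then show ?thesis
      by (simp add: fdiff_Suc)
  qed
  obtain k where "m = Suc j + k"
    using assms(2) le_Suc_ex by blast
  then show ?thesis
    using assms(3)
  proof (induction k arbitrary: m z)
    case (Suc k)
    then show ?case by (simp add: fdiff_Suc)
  qed (use base in simp)
qed

text \<open>\<open>w \<mapsto> d\<^sup>jf(p; w, \<dots>, w)\<close> behaves like a homogeneous polynomial of degree \<open>j\<close>: its differences
of order \<open>> j\<close> vanish, so the lower Taylor terms are invisible to \<open>\<delta>\<^sup>N\<close>.\<close>

lemma fdiff_md_diag_vanish:
  fixes f :: "'a::real_normed_vector \<Rightarrow> real"
  assumes H: "md_smooth N f"
  shows "j < N \<Longrightarrow> Suc j \<le> m \<Longrightarrow> m \<le> length y \<Longrightarrow> fdiff m y (md_diag f j p) z = 0"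
proof (induction j arbitrary: m y z rule: less_induct)
  case (less j)
  define Rem where "Rem r w = f (p + r *\<^sub>R w) - (\<Sum>i\<le>j. r ^ i / fact i * md_diag f i p w)" for r w
  have "fdiff (Suc j) y (md_diag f j p) 0 = 0" if y: "Suc j \<le> length y" for y
  proof -
    have lower: "fdiff (Suc j) y (md_diag f i p) 0 = 0" if "i < j" for i
      using less.IH[OF that _ _ y] that less.prems(1) by simp
    have expand: "fdiff (Suc j) y (md_diag f j p) 0 / fact j + fdiff (Suc j) y (\<lambda>w. Rem r w / r ^ j) 0
        = fdiff (Suc j) (map (scaleR r) y) f p / r ^ j" if "r \<noteq> 0" for r
    proof -
      have "fdiff (Suc j) (map (scaleR r) y) f p = fdiff (Suc j) y (\<lambda>w. (\<Sum>i\<le>j. r ^ i / fact i * md_diag f i p w) + Rem r w) 0"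
        using y by (simp add: fdiff_scaleR_eq_fdiff_at_0 Rem_def)
      also have "\<dots> = (\<Sum>i\<le>j. r ^ i / fact i * fdiff (Suc j) y (md_diag f i p) 0) + fdiff (Suc j) y (Rem r) 0"
        by (simp only: fdiff_add fdiff_sum fdiff_cmult)
      also have "(\<Sum>i\<le>j. r ^ i / fact i * fdiff (Suc j) y (md_diag f i p) 0)
          = (\<Sum>i<j. r ^ i / fact i * fdiff (Suc j) y (md_diag f i p) 0) + r ^ j / fact j * fdiff (Suc j) y (md_diag f j p) 0"
        by (simp add: lessThan_Suc_atMost[symmetric])
      also have "(\<Sum>i<j. r ^ i / fact i * fdiff (Suc j) y (md_diag f i p) 0) = 0"
        by (rule sum.neutral) (simp add: lower)
      finally show ?thesis
        using that fdiff_cmult[of "Suc j" y "1 / r ^ j" "Rem r" 0] by (simp add: field_simps)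
    qed
    have "((\<lambda>r. fdiff (Suc j) y (\<lambda>w. Rem r w / r ^ j) 0) \<longlongrightarrow> fdiff (Suc j) y (\<lambda>w. 0) 0) (at 0)"
      unfolding Rem_def using deriv_chain_md_diag[OF H] less.prems(1)
      by (intro fdiff_tendsto md_diag_taylor_remainder)
    then have "((\<lambda>r. fdiff (Suc j) y (md_diag f j p) 0 / fact j + fdiff (Suc j) y (\<lambda>w. Rem r w / r ^ j) 0)
        \<longlongrightarrow> fdiff (Suc j) y (md_diag f j p) 0 / fact j + 0) (at 0)"
      by (intro tendsto_add tendsto_const) (simp add: fdiff_zero_fun)
    moreover have "\<forall>\<^sub>F r in at 0. fdiff (Suc j) y (md_diag f j p) 0 / fact j + fdiff (Suc j) y (\<lambda>w. Rem r w / r ^ j) 0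
        = fdiff (Suc j) (map (scaleR r) y) f p / r ^ j"
      by (simp add: eventually_at_filter expand)
    ultimately have "((\<lambda>r. fdiff (Suc j) (map (scaleR r) y) f p / r ^ j) \<longlongrightarrow> fdiff (Suc j) y (md_diag f j p) 0 / fact j + 0) (at 0)"
      by (rule Lim_transform_eventually)
    moreover have "((\<lambda>r. fdiff (Suc j) (map (scaleR r) y) f p / r ^ j) \<longlongrightarrow> 0) (at 0)"
      using H[unfolded md_smooth_def] less.prems(1) y by (intro fdiff_quotient_lower_tendsto_0) auto
    ultimately have "fdiff (Suc j) y (md_diag f j p) 0 / fact j + 0 = 0"
      by (rule LIM_unique)
    then show ?thesis
      by simp
  qed
  then show ?case
    using fdiff_vanish_of_vanish_at_0 less.prems(2,3) by blast
qed

section \<open>Uniform convergence and the interchange of limits\<close>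

lemma md_diag_taylor_deviation:
  fixes f :: "'a::real_normed_vector \<Rightarrow> real"
  assumes "deriv_chain N (\<lambda>j t. md_diag f j (q' + t *\<^sub>R w) w)"
    and B: "\<And>\<xi>. \<bar>\<xi>\<bar> \<le> \<bar>r\<bar> \<Longrightarrow> \<bar>md_diag f N (q' + \<xi> *\<^sub>R w) w - md_diag f N q w\<bar> \<le> B"
  shows "\<bar>f (q' + r *\<^sub>R w) - (\<Sum>i<N. r ^ i / fact i * md_diag f i q' w) - r ^ N / fact N * md_diag f N q w\<bar>
    \<le> \<bar>r\<bar> ^ N / fact N * B"
proof -
  obtain \<xi> where \<xi>: "\<bar>\<xi>\<bar> \<le> \<bar>r\<bar>" "f (q' + r *\<^sub>R w) =
      (\<Sum>i<N. md_diag f i q' w / fact i * r ^ i) + md_diag f N (q' + \<xi> *\<^sub>R w) w / fact N * r ^ N"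
    using taylor_md_diag[OF assms(1)] by blast
  have "f (q' + r *\<^sub>R w) - (\<Sum>i<N. r ^ i / fact i * md_diag f i q' w) - r ^ N / fact N * md_diag f N q w
      = r ^ N / fact N * (md_diag f N (q' + \<xi> *\<^sub>R w) w - md_diag f N q w)"
    by (simp add: \<xi>(2) algebra_simps)
  then have "\<bar>f (q' + r *\<^sub>R w) - (\<Sum>i<N. r ^ i / fact i * md_diag f i q' w) - r ^ N / fact N * md_diag f N q w\<bar>
      = \<bar>r\<bar> ^ N / fact N * \<bar>md_diag f N (q' + \<xi> *\<^sub>R w) w - md_diag f N q w\<bar>"
    by (simp add: abs_mult power_abs)
  also have "\<dots> \<le> \<bar>r\<bar> ^ N / fact N * B"
    using B[OF \<xi>(1)] by (intro mult_left_mono) auto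
  finally show ?thesis .
qed

lemma eventually_md_diag_close:
  fixes f :: "'a::real_normed_vector \<Rightarrow> real"
  assumes "finite W" "cont_on_prod N (md N (\<lambda>q ws. f q))" "0 < e"
  shows "\<forall>\<^sub>F y in nhds q. \<forall>w\<in>W. \<bar>md_diag f N y w - md_diag f N q w\<bar> < e"
proof (rule eventually_ball_finite[OF assms(1)], intro ballI)
  fix w
  have "isCont (\<lambda>y. md_diag f N y w) q"
    unfolding md_diag_def using assms(2) by (intro cont_on_prod_isCont) auto
  then obtain d where "0 < d" "\<And>y. dist y q < d \<Longrightarrow> dist (md_diag f N y w) (md_diag f N q w) < e"
    using assms(3) unfolding continuous_at_eps_delta by blast
  then show "\<forall>\<^sub>F y in nhds q. \<bar>md_diag f N y w - md_diag f N q w\<bar> < e"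
    unfolding eventually_nhds_metric by (auto simp: dist_real_def)
qed

lemma norm_sum_nth_le:
  fixes x :: "'a::real_normed_vector list"
  assumes "I \<subseteq> {0..<N}"
  shows "norm (\<Sum>i\<in>I. x ! i) \<le> (\<Sum>i<N. norm (x ! i))"
proof -
  have "norm (\<Sum>i\<in>I. x ! i) \<le> (\<Sum>i\<in>I. norm (x ! i))"
    by (rule norm_sum)
  also have "\<dots> \<le> (\<Sum>i\<in>{0..<N}. norm (x ! i))"
    by (rule sum_mono2) (use assms in auto)
  finally show ?thesis
    by (simp add: atLeast0LessThan)
qed

lemma fdiff_taylor_deviation:
  fixes f :: "'a::real_normed_vector \<Rightarrow> real"
  assumes H: "md_smooth N f"
    and "length x = N"
  shows "fdiff N x (\<lambda>w. f (q' + r *\<^sub>R w) - (\<Sum>i<N. r ^ i / fact i * md_diag f i q' w) - r ^ N / fact N * md_diag f N q w) 0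
    = fdiff N (map (scaleR r) x) f q' - r ^ N / fact N * fdiff N x (md_diag f N q) 0"
proof -
  have "(\<Sum>i<N. r ^ i / fact i * fdiff N x (md_diag f i q') 0) = 0"
    using fdiff_md_diag_vanish[OF H] assms(2) by (intro sum.neutral) auto
  then show ?thesis
    using assms(2) by (simp only: fdiff_diff fdiff_sum fdiff_cmult fdiff_scaleR_eq_fdiff_at_0 order_refl)
qed

text \<open>Uniformity in the base point is what allows the two limits to be interchanged.\<close>

lemma fdiff_quotient_uniform:
  fixes f :: "'a::real_normed_vector \<Rightarrow> real"
  assumes H: "md_smooth N f"
    and lx: "length x = N" and e: "0 < e"
  shows "\<exists>d>0. \<forall>q' r. dist q' q < d \<longrightarrow> r \<noteq> 0 \<longrightarrow> \<bar>r\<bar> < d \<longrightarrow>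
     \<bar>fdiff N (map (scaleR r) x) f q' / r ^ N - fdiff N x (md_diag f N q) 0 / fact N\<bar> \<le> e"
proof -
  define W where "W = (\<lambda>I. \<Sum>i\<in>I. x ! i) ` Pow {0..<N}"
  define S where "S = (\<Sum>i<N. norm (x ! i))"
  have S0: "0 \<le> S"
    by (simp add: S_def sum_nonneg)
  have S: "norm w \<le> S" if "w \<in> W" for w
    using that norm_sum_nth_le by (auto simp: W_def S_def)
  define e' where "e' = e * fact N / 2 ^ N"
  have "\<forall>\<^sub>F y in nhds q. \<forall>w\<in>W. \<bar>md_diag f N y w - md_diag f N q w\<bar> < e'"
    using H[unfolded md_smooth_def] e by (intro eventually_md_diag_close) (auto simp: W_def e'_def)
  then obtain d0 where d0: "0 < d0" "\<And>y w. dist y q < d0 \<Longrightarrow> w \<in> W \<Longrightarrow> \<bar>md_diag f N y w - md_diag f N q w\<bar> < e'"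
    unfolding eventually_nhds_metric by blast
  show ?thesis
  proof (intro exI[of _ "d0 / (S + 1)"] conjI allI impI)
    fix q' r
    assume q': "dist q' q < d0 / (S + 1)" and r0: "r \<noteq> 0" and r: "\<bar>r\<bar> < d0 / (S + 1)"
    define R where "R w = f (q' + r *\<^sub>R w) - (\<Sum>i<N. r ^ i / fact i * md_diag f i q' w) - r ^ N / fact N * md_diag f N q w" for w
    have "\<bar>R w\<bar> \<le> \<bar>r\<bar> ^ N / fact N * e'" if "w \<in> W" for w
      unfolding R_def
    proof (rule md_diag_taylor_deviation[OF deriv_chain_md_diag[OF H]])
      fix \<xi> :: real
      assume "\<bar>\<xi>\<bar> \<le> \<bar>r\<bar>"
      then have "norm (\<xi> *\<^sub>R w) \<le> \<bar>r\<bar> * S"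
        using S[OF \<open>w \<in> W\<close>] by (simp add: mult_mono)
      moreover have "dist (q' + \<xi> *\<^sub>R w) q \<le> dist q' q + norm (\<xi> *\<^sub>R w)"
        using norm_triangle_ineq[of "q' - q" "\<xi> *\<^sub>R w"] by (simp add: dist_norm algebra_simps)
      ultimately have "dist (q' + \<xi> *\<^sub>R w) q \<le> dist q' q + \<bar>r\<bar> * S"
        by linarith
      also have "\<dots> < d0 / (S + 1) + d0 / (S + 1) * S"
        using q' r S0 by (intro add_less_le_mono mult_right_mono) auto
      also have "\<dots> = d0 / (S + 1) * (S + 1)"
        by (simp add: algebra_simps add_divide_distrib)
      also have "\<dots> = d0"
        using S0 by simp
      finally show "\<bar>md_diag f N (q' + \<xi> *\<^sub>R w) w - md_diag f N q w\<bar> \<le> e'"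
        using d0(2) \<open>w \<in> W\<close> by (simp add: less_imp_le)
    qed
    then have "\<bar>fdiff N x R 0\<bar> \<le> 2 ^ N * (\<bar>r\<bar> ^ N / fact N * e')"
      by (intro fdiff_bound) (simp add: W_def)
    moreover have "fdiff N x R 0 = fdiff N (map (scaleR r) x) f q' - r ^ N / fact N * fdiff N x (md_diag f N q) 0"
      unfolding R_def by (rule fdiff_taylor_deviation[OF H lx])
    ultimately show "\<bar>fdiff N (map (scaleR r) x) f q' / r ^ N - fdiff N x (md_diag f N q) 0 / fact N\<bar> \<le> e"
      using r0 by (simp add: e'_def field_simps abs_div abs_mult power_abs)
  qed (use d0 S0 in simp)
qed

lemma fdiff_snoc_translate:
  "length vs = n \<Longrightarrow> fdiff n vs (\<lambda>x. H (x + c + v) - H (x + c)) q = fdiff (Suc n) (vs @ [v]) H (q + c)"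
  using fdiff_translate[of n vs "\<lambda>y. H (y + v) - H y" c q] by (simp add: fdiff_snoc add_ac)

text \<open>Splitting every step \<open>m r u\<^sub>i\<close> into \<open>m\<close> steps \<open>r u\<^sub>i\<close> writes \<open>\<delta>\<^sup>n(q; m r u)\<close> as a sum of
\<open>m\<^sup>n\<close> differences \<open>\<delta>\<^sup>n(q'; r u)\<close> based near \<open>q\<close>; so an error bound for the latter transfers to the
former.\<close>

lemma fdiff_subdivide:
  fixes H :: "'a::real_normed_vector \<Rightarrow> real"
  assumes "\<And>q'. norm (q' - q) \<le> real m * \<bar>r\<bar> * sum_list (map norm us) \<Longrightarrow>
      \<bar>fdiff (length us) (map (scaleR r) us) H q' - r ^ length us * C\<bar> \<le> \<bar>r\<bar> ^ length us * e"
  shows "\<bar>fdiff (length us) (map (scaleR (real m * r)) us) H q - (real m * r) ^ length us * C\<bar>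
    \<le> \<bar>real m * r\<bar> ^ length us * e"
  using assms
proof (induction us arbitrary: H C e rule: rev_induct)
  case Nil
  then show ?case using Nil[of q] by simp
next
  case (snoc v vs)
  let ?n = "length vs" and ?c = "\<lambda>l. (real l * r) *\<^sub>R v"
  let ?h = "\<lambda>l x. H (x + ?c l + r *\<^sub>R v) - H (x + ?c l)"
  have tele: "H (x + (real m * r) *\<^sub>R v) - H x = (\<Sum>l<m. ?h l x)" for x
  proof -
    have "(\<Sum>l<m. ?h l x) = (\<Sum>l<m. H (x + ?c (Suc l)) - H (x + ?c l))"
      by (simp add: algebra_simps scaleR_add_left)
    also have "\<dots> = H (x + ?c m) - H (x + ?c 0)"
      by (rule sum_lessThan_telescope)
    finally show ?thesis by simp
  qed
  have split: "fdiff (length (vs @ [v])) (map (scaleR (real m * r)) (vs @ [v])) H q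
      = (\<Sum>l<m. fdiff ?n (map (scaleR (real m * r)) vs) (?h l) q)"
    by (simp add: fdiff_snoc tele fdiff_sum)
  have "\<bar>fdiff ?n (map (scaleR (real m * r)) vs) (?h l) q - (real m * r) ^ ?n * (r * C)\<bar>
      \<le> \<bar>real m * r\<bar> ^ ?n * (\<bar>r\<bar> * e)" if "l < m" for l
  proof (rule snoc.IH)
    fix q'
    assume q': "norm (q' - q) \<le> real m * \<bar>r\<bar> * sum_list (map norm vs)"
    have "norm (q' + ?c l - q) \<le> norm (q' - q) + norm (?c l)"
      using norm_triangle_ineq[of "q' - q" "?c l"] by (simp add: algebra_simps)
    also have "norm (?c l) \<le> real m * \<bar>r\<bar> * norm v"
      using that by (simp add: abs_mult mult_right_mono)
    finally have "norm (q' + ?c l - q) \<le> real m * \<bar>r\<bar> * sum_list (map norm (vs @ [v]))"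
      using q' by (simp add: algebra_simps)
    from snoc.prems[OF this]
    show "\<bar>fdiff ?n (map (scaleR r) vs) (?h l) q' - r ^ ?n * (r * C)\<bar> \<le> \<bar>r\<bar> ^ ?n * (\<bar>r\<bar> * e)"
      by (simp add: fdiff_snoc_translate mult_ac)
  qed
  then have "\<bar>\<Sum>l<m. fdiff ?n (map (scaleR (real m * r)) vs) (?h l) q - (real m * r) ^ ?n * (r * C)\<bar>
      \<le> (\<Sum>l<m. \<bar>real m * r\<bar> ^ ?n * (\<bar>r\<bar> * e))"
    by (intro order_trans[OF sum_abs sum_mono]) simp
  then show ?case
    unfolding split by (simp add: sum_subtractf abs_mult power_mult_distrib algebra_simps)
qed

lemma fdiff_quotient_tendsto_md_diag:
  fixes f :: "'a::real_normed_vector \<Rightarrow> real"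
  assumes H: "md_smooth N f"
    and "length x = N"
  shows "((\<lambda>r. fdiff N (map (scaleR r) x) f q / r ^ N) \<longlongrightarrow> fdiff N x (md_diag f N q) 0 / fact N) (at 0)"
proof (rule LIM_I)
  fix e :: real
  assume "0 < e"
  then obtain d where "0 < d" "\<And>r. r \<noteq> 0 \<Longrightarrow> \<bar>r\<bar> < d \<Longrightarrow>
      \<bar>fdiff N (map (scaleR r) x) f q / r ^ N - fdiff N x (md_diag f N q) 0 / fact N\<bar> \<le> e / 2"
    using fdiff_quotient_uniform[OF H assms(2), of "e / 2" q] by fastforce
  then show "\<exists>d>0. \<forall>r. r \<noteq> 0 \<and> norm (r - 0) < d \<longrightarrow>
      norm (fdiff N (map (scaleR r) x) f q / r ^ N - fdiff N x (md_diag f N q) 0 / fact N) < e"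
    using \<open>0 < e\<close> by (intro exI[of _ d]) fastforce
qed

lemma md_eq_fdiff_md_diag:
  fixes f :: "'a::real_normed_vector \<Rightarrow> real"
  assumes "md_smooth N f"
    and "length us = N"
  shows "md N (\<lambda>q ws. f q) q us = fdiff N us (md_diag f N q) 0 / fact N"
  using fdiff_quotient_tendsto_md_diag[OF assms] assms(2) by (intro md_eqI) auto

lemma fdiff_nested_quotient_bound:
  fixes f :: "'a::real_normed_vector \<Rightarrow> real"
  assumes close: "\<And>q' r. dist q' q < d \<Longrightarrow> r \<noteq> 0 \<Longrightarrow> \<bar>r\<bar> < d \<Longrightarrow>
      \<bar>fdiff (n1 + n2) (map (scaleR r) (u @ w)) f q' / r ^ (n1 + n2) - M\<bar> \<le> e"
    and len: "length u = n1" "length w = n2"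
    and s: "s \<noteq> 0" "\<bar>s\<bar> * (sum_list (map norm u) + 1) < d"
  shows "\<bar>fdiff n1 (map (scaleR s) u) (\<lambda>p. fdiff n2 (map (scaleR (s / Suc m)) w) f p / (s / Suc m) ^ n2) q / s ^ n1 - M\<bar> \<le> e"
proof -
  define t where "t = s / Suc m"
  have t: "t \<noteq> 0" "real (Suc m) * t = s" "real (Suc m) * \<bar>t\<bar> = \<bar>s\<bar>" "\<bar>t\<bar> \<le> \<bar>s\<bar>"
    using s(1) by (auto simp: t_def abs_div divide_le_eq)
  have "0 \<le> sum_list (map norm u)"
    by (induction u) auto
  then have "\<bar>s\<bar> * 1 \<le> \<bar>s\<bar> * (sum_list (map norm u) + 1)"
    by (intro mult_left_mono) auto
  then have s_lt: "\<bar>s\<bar> < d"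
    using s(2) by linarith
  let ?H = "\<lambda>p. fdiff n2 (map (scaleR t) w) f p"
  have "\<bar>fdiff n1 (map (scaleR t) u) ?H q' - t ^ n1 * (t ^ n2 * M)\<bar> \<le> \<bar>t\<bar> ^ n1 * (\<bar>t\<bar> ^ n2 * e)"
    if "norm (q' - q) \<le> real (Suc m) * \<bar>t\<bar> * sum_list (map norm u)" for q'
  proof -
    have "norm (q' - q) \<le> \<bar>s\<bar> * sum_list (map norm u)"
      using that t(3) by simp
    then have "dist q' q < d"
      using s(2) by (simp add: dist_norm algebra_simps)
    moreover have "\<bar>t\<bar> < d"
      using t(4) s_lt by linarith
    ultimately have "\<bar>fdiff (n1 + n2) (map (scaleR t) (u @ w)) f q' / t ^ (n1 + n2) - M\<bar> \<le> e"
      using close t(1) by blast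
    moreover have "fdiff (n1 + n2) (map (scaleR t) (u @ w)) f q' - t ^ (n1 + n2) * M
        = t ^ (n1 + n2) * (fdiff (n1 + n2) (map (scaleR t) (u @ w)) f q' / t ^ (n1 + n2) - M)"
      using t(1) by (simp add: field_simps)
    ultimately have "\<bar>fdiff (n1 + n2) (map (scaleR t) (u @ w)) f q' - t ^ (n1 + n2) * M\<bar> \<le> \<bar>t\<bar> ^ (n1 + n2) * e"
      by (simp add: abs_mult power_abs mult_left_mono)
    then show ?thesis
      using fdiff_append[of "map (scaleR t) u" n1 n2 "map (scaleR t) w" f q'] len by (simp add: power_add mult_ac)
  qed
  then have "\<bar>fdiff n1 (map (scaleR (real (Suc m) * t)) u) ?H q - (real (Suc m) * t) ^ n1 * (t ^ n2 * M)\<bar>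
      \<le> \<bar>real (Suc m) * t\<bar> ^ n1 * (\<bar>t\<bar> ^ n2 * e)"
    using fdiff_subdivide[of q "Suc m" t u ?H "t ^ n2 * M" "\<bar>t\<bar> ^ n2 * e"] len(1) by simp
  then have bound: "\<bar>fdiff n1 (map (scaleR s) u) ?H q - s ^ n1 * (t ^ n2 * M)\<bar> \<le> \<bar>s\<bar> ^ n1 * (\<bar>t\<bar> ^ n2 * e)"
    by (simp only: t(2))
  have "fdiff n1 (map (scaleR s) u) (\<lambda>p. ?H p / t ^ n2) q / s ^ n1 - M
      = (fdiff n1 (map (scaleR s) u) ?H q - s ^ n1 * (t ^ n2 * M)) / (s ^ n1 * t ^ n2)"
    using fdiff_cmult[of n1 "map (scaleR s) u" "1 / t ^ n2" ?H q] s(1) t(1) by (simp add: field_simps)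
  also have "\<bar>\<dots>\<bar> \<le> e"
    using bound s(1) t(1) by (simp add: abs_div abs_mult power_abs divide_le_eq mult_ac)
  finally show ?thesis
    by (simp add: t_def)
qed

lemma fdiff_md_quotient_tendsto:
  fixes f :: "'a::real_normed_vector \<Rightarrow> real"
  assumes H: "md_smooth (n1 + n2) f"
    and len: "length us = n1 + n2"
  shows "((\<lambda>s. fdiff n1 (map (scaleR s) us) (\<lambda>p. md n2 (\<lambda>q ws. f q) p (drop n1 us)) q / s ^ n1)
    \<longlongrightarrow> fdiff (n1 + n2) us (md_diag f (n1 + n2) q) 0 / fact (n1 + n2)) (at 0)"
proof (rule LIM_I)
  fix e :: real
  assume "0 < e"
  define u where "u = take n1 us"
  define w where "w = drop n1 us"
  have uw: "length u = n1" "length w = n2" "us = u @ w"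
    using len by (simp_all add: u_def w_def)
  let ?M = "fdiff (n1 + n2) us (md_diag f (n1 + n2) q) 0 / fact (n1 + n2)"
  obtain d where d: "0 < d" "\<And>q' r. dist q' q < d \<Longrightarrow> r \<noteq> 0 \<Longrightarrow> \<bar>r\<bar> < d \<Longrightarrow>
      \<bar>fdiff (n1 + n2) (map (scaleR r) (u @ w)) f q' / r ^ (n1 + n2) - ?M\<bar> \<le> e / 2"
    using fdiff_quotient_uniform[OF H len, of "e / 2" q] \<open>0 < e\<close> uw(3) by auto
  define S where "S = sum_list (map norm u) + 1"
  have "0 \<le> sum_list (map norm u)"
    by (induction u) auto
  then have S: "0 < S"
    by (simp add: S_def)
  show "\<exists>d>0. \<forall>s. s \<noteq> 0 \<and> norm (s - 0) < d \<longrightarrow>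
      norm (fdiff n1 (map (scaleR s) us) (\<lambda>p. md n2 (\<lambda>q ws. f q) p (drop n1 us)) q / s ^ n1 - ?M) < e"
  proof (intro exI[of _ "d / S"] conjI allI impI)
    fix s :: real
    assume s: "s \<noteq> 0 \<and> norm (s - 0) < d / S"
    then have "\<bar>s\<bar> * S < d"
      using S by (simp add: field_simps)
    then have bound: "\<bar>fdiff n1 (map (scaleR s) u) (\<lambda>p. fdiff n2 (map (scaleR (s / Suc m)) w) f p / (s / Suc m) ^ n2) q
        / s ^ n1 - ?M\<bar> \<le> e / 2" for m
      using fdiff_nested_quotient_bound[OF d(2) uw(1,2)] s by (simp add: S_def)
    have "filterlim (\<lambda>m. s / real (Suc m)) (at 0) sequentially"
      using LIMSEQ_Suc[OF lim_const_over_n[of s]] s by (simp add: filterlim_at)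
    then have "(\<lambda>m. fdiff n2 (map (scaleR (s / Suc m)) w) f p / (s / Suc m) ^ n2) \<longlonglongrightarrow> md n2 (\<lambda>q ws. f q) p w" for p
      using H[unfolded md_smooth_def] uw(2) by (intro filterlim_compose[OF md_fun_tendsto]) auto
    moreover have "s ^ n1 \<noteq> 0"
      using s by simp
    ultimately have "(\<lambda>m. \<bar>fdiff n1 (map (scaleR s) u) (\<lambda>p. fdiff n2 (map (scaleR (s / Suc m)) w) f p / (s / Suc m) ^ n2) q
        / s ^ n1 - ?M\<bar>) \<longlonglongrightarrow> \<bar>fdiff n1 (map (scaleR s) u) (\<lambda>p. md n2 (\<lambda>q ws. f q) p w) q / s ^ n1 - ?M\<bar>"
      by (intro tendsto_intros fdiff_tendsto)
    then have "\<bar>fdiff n1 (map (scaleR s) u) (\<lambda>p. md n2 (\<lambda>q ws. f q) p w) q / s ^ n1 - ?M\<bar> \<le> e / 2"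
      by (rule LIMSEQ_le_const2) (use bound in auto)
    moreover have "fdiff n1 (map (scaleR s) us) G q = fdiff n1 (map (scaleR s) u) G q" for G
      using uw(1) by (simp add: uw(3) fdiff_append_right)
    ultimately show "norm (fdiff n1 (map (scaleR s) us) (\<lambda>p. md n2 (\<lambda>q ws. f q) p (drop n1 us)) q / s ^ n1 - ?M) < e"
      using \<open>0 < e\<close> by (simp add: w_def[symmetric])
  qed (use d S in simp)
qed

theorem proposition11:
  fixes f :: "'a::euclidean_space \<Rightarrow> real" and n1 n2 :: nat
  assumes "\<forall>k\<le>n1 + n2. md_exists k 0 (\<lambda>q ws. f q) \<and> cont_on_prod k (md k (\<lambda>q ws. f q))"
    and "md_exists n1 n2 (md n2 (\<lambda>q ws. f q))"
  shows "\<forall>q us. length us = n1 + n2 \<longrightarrow>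
           md n1 (md n2 (\<lambda>q ws. f q)) q us = md (n1 + n2) (\<lambda>q ws. f q) q us"
proof (intro allI impI)
  fix q :: 'a and us :: "'a list"
  assume len: "length us = n1 + n2"
  have H: "md_smooth (n1 + n2) f"
    using assms(1) by (simp add: md_smooth_def)
  have "md n1 (md n2 (\<lambda>q ws. f q)) q us = fdiff (n1 + n2) us (md_diag f (n1 + n2) q) 0 / fact (n1 + n2)"
    using fdiff_md_quotient_tendsto[OF H len] len by (intro md_eqI) auto
  also have "\<dots> = md (n1 + n2) (\<lambda>q ws. f q) q us"
    using md_eq_fdiff_md_diag[OF H len] by simp
  finally show "md n1 (md n2 (\<lambda>q ws. f q)) q us = md (n1 + n2) (\<lambda>q ws. f q) q us" .
qed

end
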